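(* Let $X,Y$ be bounded normal operators on a complex Hilbert space $\mathcal H$ with $e^X=e^Y$. Suppose $\sigma(X)$ and $\sigma(Y)$ are contained in $\{x+iy: x\in\mathbb{R},\ y\in[(2k_0+1)\pi,(2k_1+1)\pi]\}$ for some integers $k_0,k_1$. For $k\in\mathbb{Z}$ let $P_{2k+1}=E_X(\{x+iy: y\in((2k-1)\pi,(2k+1)\pi)\})$, $Q_{2k+1}=E_Y(\{x+iy: y\in((2k-1)\pi,(2k+1)\pi)\})$, $E_{2k+1}=E_X(\{x+iy: y=(2k+1)\pi\})$, $F_{2k+1}=E_Y(\{x+iy: y=(2k+1)\pi\})$ (with $x,y$ real). Then \[ X-Y=\sum_{k=k_0}^{k_1}\Big(2k\pi i\,(P_{2k+1}-Q_{2k+1})+(2k+1)\pi i\,(E_{2k+1}-F_{2k+1})\Big). \]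
   Context: $E_X,E_Y$ are the spectral measures of $X,Y$, extended to all Borel subsets of $\mathbb{C}$ by $E_X(\Omega)=E_X(\Omega\cap\sigma(X))$. *)

theory Defs
  imports "HOL-Analysis.Analysis"
begin

class complex_vector = real_vector +
  fixes scaleC :: "complex \<Rightarrow> 'a \<Rightarrow> 'a"  (infixr "*\<^sub>C" 75)
  assumes scaleC_add_right: "a *\<^sub>C (x + y) = a *\<^sub>C x + a *\<^sub>C y"
    and scaleC_add_left: "(a + b) *\<^sub>C x = a *\<^sub>C x + b *\<^sub>C x"
    and scaleC_scaleC: "a *\<^sub>C (b *\<^sub>C x) = (a * b) *\<^sub>C x"
    and scaleC_one: "1 *\<^sub>C x = x"
    and scaleR_scaleC: "r *\<^sub>R x = complex_of_real r *\<^sub>C x"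

text \<open>Inner product, conjugate-linear in the first and linear in the second argument.\<close>
class complex_inner = complex_vector + real_normed_vector +
  fixes cinner :: "'a \<Rightarrow> 'a \<Rightarrow> complex"
  assumes cinner_commute: "cinner x y = cnj (cinner y x)"
    and cinner_add_right: "cinner x (y + z) = cinner x y + cinner x z"
    and cinner_scaleC_right: "cinner x (a *\<^sub>C y) = a * cinner x y"
    and cinner_self_real_nonneg: "Im (cinner x x) = 0 \<and> Re (cinner x x) \<ge> 0"
    and cinner_self_eq_zero: "cinner x x = 0 \<longleftrightarrow> x = 0"
    and norm_eq_sqrt_cinner: "norm x = sqrt (Re (cinner x x))"

class chilbert_space = complex_inner + complete_space

definition is_clinear :: "('a::complex_vector \<Rightarrow> 'b::complex_vector) \<Rightarrow> bool" where
  "is_clinear T \<longleftrightarrow> (\<forall>x y. T (x + y) = T x + T y) \<and> (\<forall>c x. T (c *\<^sub>C x) = c *\<^sub>C T x)"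

definition is_bounded_clinear :: "('a::complex_inner \<Rightarrow> 'b::complex_inner) \<Rightarrow> bool" where
  "is_bounded_clinear T \<longleftrightarrow> is_clinear T \<and> (\<exists>K. \<forall>x. norm (T x) \<le> norm x * K)"

definition is_adjoint :: "('a::complex_inner \<Rightarrow> 'a) \<Rightarrow> ('a \<Rightarrow> 'a) \<Rightarrow> bool" where
  "is_adjoint T S \<longleftrightarrow> (\<forall>x y. cinner (T x) y = cinner x (S y))"

definition is_normal_op :: "('a::complex_inner \<Rightarrow> 'a) \<Rightarrow> bool" where
  "is_normal_op T \<longleftrightarrow> is_bounded_clinear T \<and>
     (\<exists>S. is_bounded_clinear S \<and> is_adjoint T S \<and> T \<circ> S = S \<circ> T)"

definition is_orth_proj :: "('a::complex_inner \<Rightarrow> 'a) \<Rightarrow> bool" where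
  "is_orth_proj P \<longleftrightarrow> is_bounded_clinear P \<and> P \<circ> P = P \<and> is_adjoint P P"

definition op_spectrum :: "('a::complex_inner \<Rightarrow> 'a) \<Rightarrow> complex set" where
  "op_spectrum T = {l. \<not> (\<exists>S. is_bounded_clinear S \<and>
       (\<forall>x. S (T x - l *\<^sub>C x) = x) \<and> (\<forall>x. T (S x) - l *\<^sub>C S x = x))}"

text \<open>Operator exponential \<open>e^T = \<Sum> T^n / n!\<close> (for bounded T the series converges
  in operator norm, hence pointwise to the same limit).\<close>
definition op_exp :: "('a::complex_inner \<Rightarrow> 'a) \<Rightarrow> 'a \<Rightarrow> 'a" where
  "op_exp T = (\<lambda>x. \<Sum>n. (1 / fact n) *\<^sub>R (T ^^ n) x)"

text \<open>The scalar measure \<open>\<mu>_x(A) = \<langle>E(A)x, x\<rangle> = \<parallel>E(A)x\<parallel>^2\<close> on the Borel sets of \<open>\<complex>\<close>.\<close>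
definition spectral_mu :: "(complex set \<Rightarrow> 'a \<Rightarrow> 'a::complex_inner) \<Rightarrow> 'a \<Rightarrow> complex measure" where
  "spectral_mu E x = measure_of UNIV (sets borel) (\<lambda>A. ennreal ((norm (E A x))\<^sup>2))"

text \<open>\<open>E\<close> is the spectral measure (resolution of the identity) of the normal operator \<open>T\<close>:
  a projection-valued, strongly countably additive measure on the Borel sets of \<open>\<complex>\<close>,
  concentrated on \<open>\<sigma>(T)\<close>, with \<open>T = \<integral> z dE(z)\<close>.  The last condition is stated via the
  quadratic forms \<open>\<langle>x, T x\<rangle> = \<integral> z d\<mu>_x(z)\<close>, which determine \<open>T\<close> by polarization.\<close>
definition spectral_measure_of :: "('a::chilbert_space \<Rightarrow> 'a) \<Rightarrow> (complex set \<Rightarrow> 'a \<Rightarrow> 'a) \<Rightarrow> bool" where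
  "spectral_measure_of T E \<longleftrightarrow>
     (\<forall>A\<in>sets borel. is_orth_proj (E A)) \<and>
     E {} = (\<lambda>x. 0) \<and> E UNIV = id \<and>
     (\<forall>A\<in>sets borel. \<forall>B\<in>sets borel. E (A \<inter> B) = E A \<circ> E B) \<and>
     (\<forall>F::nat \<Rightarrow> complex set. range F \<subseteq> sets borel \<longrightarrow> disjoint_family F \<longrightarrow>
        (\<forall>x. (\<lambda>n. E (F n) x) sums E (\<Union>n. F n) x)) \<and>
     E (- op_spectrum T) = (\<lambda>x. 0) \<and>
     (\<forall>x. cinner x (T x) = integral\<^sup>L (spectral_mu E x) (\<lambda>z. z))"

end

theory Submission
  imports Defs
begin

text \<open>For a bounded normal operator \<open>T\<close> with spectral measure \<open>E\<close> and a vector \<open>v\<close> let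
  \<open>\<mu>\<^sub>v(A) = \<parallel>E(A) v\<parallel>\<^sup>2\<close>.  Approximating \<open>T\<close> by step operators \<open>\<Sum> c\<^sub>i E(A\<^sub>i)\<close> shows that the image
  of \<open>\<mu>\<^sub>v\<close> under \<open>exp\<close> has the moments \<open>\<integral> conj(w)\<^sup>n w\<^sup>m = \<langle>e\<^sup>n\<^sup>T v, e\<^sup>m\<^sup>T v\<rangle>\<close>.  This image
  measure has compact support, so by Stone-Weierstrass it is determined by its moments; hence
  \<open>e\<^sup>X = e\<^sup>Y\<close> makes the image measures for \<open>X\<close> and \<open>Y\<close> equal.

  On the band containing the spectra, \<open>z = Ln_cut (e\<^sup>z) + s(z)\<close>, where \<open>s\<close> takes the value
  \<open>2k\<pi>i\<close> on the open strip \<open>|Im z - 2k\<pi>| < \<pi>\<close> and \<open>(2k+1)\<pi>i\<close> on the line \<open>Im z = (2k+1)\<pi>\<close>.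
  Integrating against \<open>\<mu>\<^sub>v\<close> gives \<open>\<langle>v, X v\<rangle> - \<langle>v, S\<^sub>X v\<rangle> = \<integral> Ln_cut d(exp\<^sub>*\<mu>\<^sub>v)\<close>, where \<open>S\<^sub>X\<close>
  is the corresponding combination of spectral projections of \<open>X\<close>.  The same holds for \<open>Y\<close> with
  the same right-hand side, so \<open>X - S\<^sub>X - (Y - S\<^sub>Y)\<close> has vanishing quadratic form and is zero.\<close>

section \<open>Complex inner product spaces\<close>

lemma scaleC_zero_right [simp]: "a *\<^sub>C (0::'a::complex_vector) = 0"
proof -
  have "a *\<^sub>C 0 + a *\<^sub>C 0 = a *\<^sub>C (0::'a) + 0" by (simp flip: scaleC_add_right)
  then show ?thesis by simp
qed

lemma scaleC_zero_left [simp]: "0 *\<^sub>C (x::'a::complex_vector) = 0"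
proof -
  have "0 *\<^sub>C x + 0 *\<^sub>C x = 0 *\<^sub>C x + 0" by (simp flip: scaleC_add_left)
  then show ?thesis by simp
qed

lemma scaleC_minus_left: "(- a) *\<^sub>C (x::'a::complex_vector) = - (a *\<^sub>C x)"
proof -
  have "(- a) *\<^sub>C x + a *\<^sub>C x = 0" by (simp flip: scaleC_add_left)
  then show ?thesis by (simp add: eq_neg_iff_add_eq_0)
qed

lemma scaleC_minus_right: "a *\<^sub>C (- x::'a::complex_vector) = - (a *\<^sub>C x)"
proof -
  have "a *\<^sub>C (- x) + a *\<^sub>C x = 0" by (simp flip: scaleC_add_right)
  then show ?thesis by (simp add: eq_neg_iff_add_eq_0)
qed

lemma scaleC_diff_right: "a *\<^sub>C (x - y::'a::complex_vector) = a *\<^sub>C x - a *\<^sub>C y"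
proof -
  have "a *\<^sub>C (x - y) + a *\<^sub>C y = a *\<^sub>C x" by (simp flip: scaleC_add_right)
  then show ?thesis by (simp add: eq_diff_eq)
qed

lemma scaleC_diff_left: "(a - b) *\<^sub>C (x::'a::complex_vector) = a *\<^sub>C x - b *\<^sub>C x"
proof -
  have "(a - b) *\<^sub>C x + b *\<^sub>C x = a *\<^sub>C x" by (simp flip: scaleC_add_left)
  then show ?thesis by (simp add: eq_diff_eq)
qed

lemma scaleC_sum_right:
  "a *\<^sub>C (\<Sum>i\<in>I. f i) = (\<Sum>i\<in>I. a *\<^sub>C (f i::'a::complex_vector))"
  by (induction I rule: infinite_finite_induct) (auto simp: scaleC_add_right)

lemma cinner_add_left: "cinner (x + y) (z::'a::complex_inner) = cinner x z + cinner y z"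
  by (metis cinner_commute cinner_add_right complex_cnj_add)

lemma cinner_scaleC_left: "cinner (a *\<^sub>C x) (y::'a::complex_inner) = cnj a * cinner x y"
  by (metis cinner_commute cinner_scaleC_right complex_cnj_mult)

lemma cinner_zero_right [simp]: "cinner x (0::'a::complex_inner) = 0"
  using cinner_scaleC_right[of x 0 0] by simp

lemma cinner_zero_left [simp]: "cinner (0::'a::complex_inner) x = 0"
  using cinner_scaleC_left[of 0 0 x] by simp

lemma cinner_minus_right: "cinner x (- y::'a::complex_inner) = - cinner x y"
proof -
  have "cinner x (- y) + cinner x y = 0" by (simp flip: cinner_add_right)
  then show ?thesis by (simp add: eq_neg_iff_add_eq_0)
qed

lemma cinner_diff_right: "cinner x (y - z::'a::complex_inner) = cinner x y - cinner x z"
proof -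
  have "cinner x (y - z) + cinner x z = cinner x y" by (simp flip: cinner_add_right)
  then show ?thesis by (simp add: eq_diff_eq)
qed

lemma cinner_diff_left: "cinner (x - y) (z::'a::complex_inner) = cinner x z - cinner y z"
proof -
  have "cinner (x - y) z + cinner y z = cinner x z" by (simp flip: cinner_add_left)
  then show ?thesis by (simp add: eq_diff_eq)
qed

lemma cinner_sum_right:
  "cinner x (\<Sum>i\<in>I. f i) = (\<Sum>i\<in>I. cinner (x::'a::complex_inner) (f i))"
  by (induction I rule: infinite_finite_induct) (auto simp: cinner_add_right)

lemma cinner_sum_left:
  "cinner (\<Sum>i\<in>I. f i) x = (\<Sum>i\<in>I. cinner (f i) (x::'a::complex_inner))"
  by (induction I rule: infinite_finite_induct) (auto simp: cinner_add_left)

lemma cinner_self_eq_norm: "cinner x x = complex_of_real ((norm (x::'a::complex_inner))\<^sup>2)"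
proof -
  have "Im (cinner x x) = 0" "Re (cinner x x) \<ge> 0" using cinner_self_real_nonneg by auto
  then show ?thesis by (simp add: norm_eq_sqrt_cinner complex_eq_iff)
qed

lemma power2_norm_eq_cinner: "(norm (x::'a::complex_inner))\<^sup>2 = Re (cinner x x)"
  by (simp add: cinner_self_eq_norm)

lemma norm_scaleC: "norm (a *\<^sub>C (x::'a::complex_inner)) = cmod a * norm x"
proof -
  have "(norm (a *\<^sub>C x))\<^sup>2 = Re (cnj a * a * cinner x x)"
    by (simp only: power2_norm_eq_cinner cinner_scaleC_left cinner_scaleC_right mult.assoc mult.left_commute)
  also have "cnj a * a = complex_of_real ((cmod a)\<^sup>2)"
    by (simp add: complex_mult_cnj mult.commute cmod_power2 flip: of_real_power of_real_add)
  finally have "(norm (a *\<^sub>C x))\<^sup>2 = (cmod a * norm x)\<^sup>2"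
    by (simp add: power_mult_distrib power2_norm_eq_cinner)
  then show ?thesis by (simp add: power2_eq_iff_nonneg)
qed

lemma power2_norm_add:
  "(norm (x + y))\<^sup>2 = (norm x)\<^sup>2 + (norm (y::'a::complex_inner))\<^sup>2 + 2 * Re (cinner x y)"
proof -
  have "cinner y x = cnj (cinner x y)" by (rule cinner_commute)
  then show ?thesis by (simp add: power2_norm_eq_cinner cinner_add_left cinner_add_right)
qed

lemma power2_norm_diff:
  "(norm (x - y))\<^sup>2 = (norm x)\<^sup>2 + (norm (y::'a::complex_inner))\<^sup>2 - 2 * Re (cinner x y)"
  using power2_norm_add[of x "-y"] by (simp add: cinner_minus_right)

lemma cinner_polarization:
  "cinner a b = ((norm (a + b))\<^sup>2 - (norm (a - b::'a::complex_inner))\<^sup>2) / 4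
     - \<i> * ((norm (a + \<i> *\<^sub>C b))\<^sup>2 - (norm (a - \<i> *\<^sub>C b))\<^sup>2) / 4"
  by (simp add: power2_norm_add power2_norm_diff norm_scaleC cinner_scaleC_right complex_eq_iff)

lemma bounded_linear_scaleC_right: "bounded_linear (\<lambda>v::'a::complex_inner. c *\<^sub>C v)"
  by (rule bounded_linear_intro[of _ "cmod c"])
     (auto simp: scaleC_add_right scaleR_scaleC scaleC_scaleC mult.commute norm_scaleC)

lemma bounded_linear_scaleC_left: "bounded_linear (\<lambda>c. c *\<^sub>C (v::'a::complex_inner))"
  by (rule bounded_linear_intro[of _ "norm v"])
     (auto simp: scaleC_add_left scaleR_scaleC scaleC_scaleC norm_scaleC scaleR_conv_of_real)

lemma tendsto_cinner:
  fixes a b :: "nat \<Rightarrow> 'a::complex_inner"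
  assumes "a \<longlonglongrightarrow> a0" "b \<longlonglongrightarrow> b0"
  shows "(\<lambda>k. cinner (a k) (b k)) \<longlonglongrightarrow> cinner a0 b0"
proof -
  have "(\<lambda>k. \<i> *\<^sub>C b k) \<longlonglongrightarrow> \<i> *\<^sub>C b0"
    by (rule bounded_linear.tendsto[OF bounded_linear_scaleC_right assms(2)])
  then show ?thesis
    unfolding cinner_polarization[of "a _" "b _"] cinner_polarization[of a0 b0]
    by (intro tendsto_intros assms) simp_all
qed

instance chilbert_space \<subseteq> banach ..

section \<open>Bounded linear operators\<close>

lemma clinear_add: "is_clinear T \<Longrightarrow> T (x + y) = T x + T y"
  by (simp add: is_clinear_def)

lemma clinear_scaleC: "is_clinear T \<Longrightarrow> T (c *\<^sub>C x) = c *\<^sub>C T x"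
  by (simp add: is_clinear_def)

lemma clinear_zero: "is_clinear T \<Longrightarrow> T 0 = 0"
  using clinear_scaleC[of T 0 0] by simp

lemma clinear_minus: "is_clinear T \<Longrightarrow> T (- x) = - T x"
  using clinear_scaleC[of T "-1" x] by (simp add: scaleC_minus_left scaleC_one)

lemma clinear_diff: "is_clinear T \<Longrightarrow> T (x - y) = T x - T y"
  using clinear_add[of T x "-y"] clinear_minus[of T y] by simp

lemma clinear_sum:
  "is_clinear T \<Longrightarrow> T (\<Sum>i\<in>I. f i) = (\<Sum>i\<in>I. T (f i))"
  by (induction I rule: infinite_finite_induct) (auto simp: clinear_add clinear_zero)

lemma clinear_scaleR: "is_clinear T \<Longrightarrow> T (r *\<^sub>R x) = r *\<^sub>R T x"
  by (simp add: scaleR_scaleC clinear_scaleC)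

lemma clinear_compose:
  "is_clinear S \<Longrightarrow> is_clinear T \<Longrightarrow> is_clinear (\<lambda>x. S (T x))"
  by (simp add: is_clinear_def)

lemma clinear_compose_diff:
  "is_clinear f \<Longrightarrow> is_clinear g \<Longrightarrow> is_clinear (\<lambda>v. f v - g v)"
  by (simp add: is_clinear_def scaleC_diff_right)

lemma clinear_compose_add:
  "is_clinear f \<Longrightarrow> is_clinear g \<Longrightarrow> is_clinear (\<lambda>v. f v + g v)"
  by (simp add: is_clinear_def scaleC_add_right)

lemma clinear_compose_scaleC:
  "is_clinear f \<Longrightarrow> is_clinear (\<lambda>v. c *\<^sub>C f v)"
  by (simp add: is_clinear_def scaleC_add_right scaleC_scaleC mult.commute)

lemma clinear_compose_sum:
  "(\<And>k. k \<in> K \<Longrightarrow> is_clinear (f k)) \<Longrightarrow> is_clinear (\<lambda>v. \<Sum>k\<in>K. f k v)"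
  unfolding is_clinear_def by (simp add: sum.distrib scaleC_sum_right)

lemma clinear_funpow:
  "is_clinear (R::'a::complex_vector \<Rightarrow> 'a) \<Longrightarrow> is_clinear (R ^^ n)"
  by (induction n) (auto simp: is_clinear_def)

lemma bounded_clinear_imp_clinear: "is_bounded_clinear T \<Longrightarrow> is_clinear T"
  by (simp add: is_bounded_clinear_def)

lemma bounded_clinearI:
  "is_clinear T \<Longrightarrow> (\<And>x. norm (T x) \<le> K * norm x) \<Longrightarrow> is_bounded_clinear T"
  unfolding is_bounded_clinear_def by (auto simp: mult.commute)

lemma bounded_clinear_bound:
  assumes "is_bounded_clinear T"
  obtains K where "K \<ge> 0" "\<And>x. norm (T x) \<le> K * norm x"
proof -
  obtain K where "\<And>x. norm (T x) \<le> norm x * K" using assms by (auto simp: is_bounded_clinear_def)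
  then have "norm (T x) \<le> max K 0 * norm x" for x
    by (smt (verit, best) mult.commute mult_right_mono norm_ge_zero)
  then show ?thesis using that[of "max K 0"] by auto
qed

lemma clinear_bounded_linear:
  "is_clinear T \<Longrightarrow> (\<And>x. norm (T x) \<le> K * norm x) \<Longrightarrow> bounded_linear T"
  by (rule bounded_linear_intro[of _ K]) (auto simp: clinear_add clinear_scaleR mult.commute)

lemma norm_funpow_le:
  fixes R :: "'a::real_normed_vector \<Rightarrow> 'a"
  assumes "\<And>x. norm (R x) \<le> r * norm x" "r \<ge> 0"
  shows "norm ((R ^^ n) x) \<le> r ^ n * norm x"
proof (induction n)
  case (Suc n)
  have "norm ((R ^^ Suc n) x) \<le> r * norm ((R ^^ n) x)" using assms(1) by simp
  also have "\<dots> \<le> r * (r ^ n * norm x)" using Suc assms(2) by (rule mult_left_mono)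
  finally show ?case by (simp add: mult.assoc)
qed simp

lemma cinner_clinear_polarization:
  fixes T :: "'a::complex_inner \<Rightarrow> 'a"
  assumes "is_clinear T"
  shows "4 * cinner y (T x) = cinner (y + x) (T (y + x)) - cinner (y - x) (T (y - x))
     - \<i> * (cinner (y + \<i> *\<^sub>C x) (T (y + \<i> *\<^sub>C x)) - cinner (y - \<i> *\<^sub>C x) (T (y - \<i> *\<^sub>C x)))"
  using assms
  by (simp add: clinear_add clinear_diff clinear_scaleC cinner_add_left cinner_add_right
      cinner_diff_left cinner_diff_right cinner_scaleC_left cinner_scaleC_right algebra_simps)

lemma cmod_polarization_le: "cmod (a - b - \<i> * (c - e)) \<le> cmod a + cmod b + cmod c + cmod e"
proof -
  have "cmod (a - b - \<i> * (c - e)) \<le> cmod (a - b) + cmod (c - e)"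
    using norm_triangle_ineq4[of "a - b" "\<i> * (c - e)"] by (simp add: norm_mult)
  also have "\<dots> \<le> cmod a + cmod b + cmod c + cmod e"
    using norm_triangle_ineq4[of a b] norm_triangle_ineq4[of c e] by linarith
  finally show ?thesis .
qed

text \<open>Polarize \<open>\<langle>y, T x\<rangle>\<close> for \<open>y = (\<parallel>x\<parallel> / \<parallel>T x\<parallel>) T x\<close>, where it equals \<open>\<parallel>x\<parallel> \<parallel>T x\<parallel>\<close>.\<close>

lemma norm_le_of_quadratic_form_le:
  fixes T :: "'a::complex_inner \<Rightarrow> 'a"
  assumes lin: "is_clinear T" and d: "\<And>x. cmod (cinner x (T x)) \<le> d * (norm x)\<^sup>2"
  shows "norm (T x) \<le> 4 * d * norm x"
proof -
  have d0: "d \<ge> 0" if "x \<noteq> 0"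
  proof -
    have "0 \<le> d * (norm x)\<^sup>2" using d[of x] by (meson norm_ge_zero order.trans)
    then show ?thesis using that by (simp add: zero_le_mult_iff)
  qed
  show ?thesis
  proof (cases "T x = 0")
    case True
    then show ?thesis using d0 by (cases "x = 0") auto
  next
    case False
    then have "x \<noteq> 0" using clinear_zero[OF lin] by auto
    note d0 = d0[OF this]
    define y where "y = (norm x / norm (T x)) *\<^sub>R T x"
    have ny: "norm y = norm x" using False by (simp add: y_def)
    have "cinner y (T x) = complex_of_real (norm x / norm (T x)) * cinner (T x) (T x)"
      by (simp add: y_def scaleR_scaleC cinner_scaleC_left)
    also have "\<dots> = complex_of_real (norm x * norm (T x))"
      using False by (simp add: cinner_self_eq_norm power2_eq_square)
    finally have yTx: "cinner y (T x) = complex_of_real (norm x * norm (T x))" .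
    have q: "cmod (cinner (y + c *\<^sub>C x) (T (y + c *\<^sub>C x))) \<le> 4 * d * (norm x)\<^sup>2"
      if "cmod c = 1" for c
    proof -
      have "norm (y + c *\<^sub>C x) \<le> 2 * norm x"
        using norm_triangle_ineq[of y "c *\<^sub>C x"] that by (simp add: norm_scaleC ny)
      then have "(norm (y + c *\<^sub>C x))\<^sup>2 \<le> (2 * norm x)\<^sup>2" by (intro power_mono) auto
      then have "d * (norm (y + c *\<^sub>C x))\<^sup>2 \<le> d * (2 * norm x)\<^sup>2" using d0 by (rule mult_left_mono)
      then show ?thesis using d[of "y + c *\<^sub>C x"] by (simp add: power_mult_distrib)
    qed
    have shapes: "y + x = y + 1 *\<^sub>C x" "y - x = y + (- 1) *\<^sub>C x" "y - \<i> *\<^sub>C x = y + (- \<i>) *\<^sub>C x"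
      by (simp_all add: scaleC_one scaleC_minus_left)
    have "4 * (norm x * norm (T x)) = cmod (4 * cinner y (T x))"
      by (simp add: yTx norm_mult)
    also have "\<dots> \<le> cmod (cinner (y + 1 *\<^sub>C x) (T (y + 1 *\<^sub>C x)))
        + cmod (cinner (y + (- 1) *\<^sub>C x) (T (y + (- 1) *\<^sub>C x)))
        + cmod (cinner (y + \<i> *\<^sub>C x) (T (y + \<i> *\<^sub>C x)))
        + cmod (cinner (y + (- \<i>) *\<^sub>C x) (T (y + (- \<i>) *\<^sub>C x)))"
      unfolding cinner_clinear_polarization[OF lin] shapes by (rule cmod_polarization_le)
    also have "\<dots> \<le> 4 * (4 * d * (norm x)\<^sup>2)"
      using q[of 1] q[of "- 1"] q[of \<i>] q[of "- \<i>"] by simp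
    finally have "norm x * norm (T x) \<le> norm x * (4 * d * norm x)"
      by (simp add: power2_eq_square algebra_simps)
    then show ?thesis using \<open>x \<noteq> 0\<close> by simp
  qed
qed

lemma clinear_eq_zero_if_quadratic_form_zero:
  fixes T :: "'a::complex_inner \<Rightarrow> 'a"
  assumes "is_clinear T" and "\<And>x. cinner x (T x) = 0"
  shows "T x = 0"
  using norm_le_of_quadratic_form_le[OF assms(1), of 0 x] assms(2) by simp

lemma orth_proj_clinear: "is_orth_proj P \<Longrightarrow> is_clinear P"
  by (simp add: is_orth_proj_def is_bounded_clinear_def)

lemma orth_proj_idem: "is_orth_proj P \<Longrightarrow> P (P x) = P x"
  by (simp add: is_orth_proj_def fun_eq_iff)

lemma orth_proj_adjoint: "is_orth_proj P \<Longrightarrow> cinner (P x) y = cinner x (P y)"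
  by (simp add: is_orth_proj_def is_adjoint_def)

lemma cinner_orth_proj_self:
  "is_orth_proj P \<Longrightarrow> cinner x (P x) = complex_of_real ((norm (P x))\<^sup>2)"
  by (metis orth_proj_adjoint orth_proj_idem cinner_self_eq_norm)

lemma bounded_clinear_compose:
  assumes "is_bounded_clinear S" "is_bounded_clinear T"
  shows "is_bounded_clinear (\<lambda>x. S (T x))"
proof -
  obtain C D where "C \<ge> 0" "\<And>x. norm (S x) \<le> C * norm x" "\<And>x. norm (T x) \<le> D * norm x"
    using assms bounded_clinear_bound by metis
  then have "norm (S (T x)) \<le> (C * D) * norm x" for x
  proof -
    have "norm (S (T x)) \<le> C * norm (T x)" by fact
    also have "\<dots> \<le> C * (D * norm x)" using \<open>norm (T x) \<le> D * norm x\<close> \<open>C \<ge> 0\<close> by (rule mult_left_mono)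
    finally show ?thesis by (simp add: mult.assoc)
  qed
  moreover have "is_clinear (\<lambda>x. S (T x))"
    using assms by (simp add: clinear_compose bounded_clinear_imp_clinear)
  ultimately show ?thesis by (intro bounded_clinearI)
qed

section \<open>The spectrum\<close>

lemma clinear_suminf_funpow:
  fixes R :: "'a::chilbert_space \<Rightarrow> 'a"
  assumes lin: "is_clinear R" and sm: "\<And>x. summable (\<lambda>n. (R ^^ n) x)"
  shows "is_clinear (\<lambda>x. \<Sum>n. (R ^^ n) x)"
  unfolding is_clinear_def
proof (intro conjI allI)
  fix x y
  show "(\<Sum>n. (R ^^ n) (x + y)) = (\<Sum>n. (R ^^ n) x) + (\<Sum>n. (R ^^ n) y)"
    using suminf_add[OF sm[of x] sm[of y]] clinear_funpow[OF lin] by (simp add: clinear_add)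
next
  fix c x
  show "(\<Sum>n. (R ^^ n) (c *\<^sub>C x)) = c *\<^sub>C (\<Sum>n. (R ^^ n) x)"
    using bounded_linear.suminf[OF bounded_linear_scaleC_right[of c] sm[of x]] clinear_funpow[OF lin]
    by (simp add: clinear_scaleC)
qed

lemma neumann_series_inverse:
  fixes R :: "'a::chilbert_space \<Rightarrow> 'a"
  assumes lin: "is_clinear R" and b: "\<And>x. norm (R x) \<le> r * norm x" and r: "0 \<le> r" "r < 1"
  obtains N where "is_bounded_clinear N" "\<And>x. N (x - R x) = x" "\<And>x. N x - R (N x) = x"
proof -
  define N where "N x = (\<Sum>n. (R ^^ n) x)" for x
  have sg: "summable (\<lambda>n. r ^ n)" using r by (simp add: summable_geometric)
  have sm: "summable (\<lambda>n. (R ^^ n) x)" for x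
    by (rule summable_comparison_test[of _ "\<lambda>n. r ^ n * norm x"])
       (use norm_funpow_le[OF b r(1)] sg in \<open>auto intro: summable_mult2\<close>)
  have linN: "is_clinear N"
    unfolding N_def[abs_def] using lin sm by (rule clinear_suminf_funpow)
  have bN: "norm (N x) \<le> (1 / (1 - r)) * norm x" for x
  proof -
    have "norm (N x) \<le> (\<Sum>n. r ^ n * norm x)"
      unfolding N_def
      by (rule norm_suminf_le) (use norm_funpow_le[OF b r(1)] sg in \<open>auto intro: summable_mult2\<close>)
    also have "\<dots> = (1 / (1 - r)) * norm x"
      using r by (simp add: suminf_mult2[OF sg, symmetric] suminf_geometric)
    finally show ?thesis .
  qed
  have shift: "(\<Sum>n. (R ^^ Suc n) x) = N x - x" for x
    unfolding N_def using suminf_split_head[OF sm[of x]] by simp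
  have RN: "R (N x) = N x - x" for x
  proof -
    have "R (N x) = (\<Sum>n. R ((R ^^ n) x))"
      unfolding N_def by (rule bounded_linear.suminf[OF clinear_bounded_linear[OF lin b] sm])
    also have "\<dots> = (\<Sum>n. (R ^^ Suc n) x)" by simp
    finally show ?thesis using shift by simp
  qed
  have NR: "N (R x) = N x - x" for x
  proof -
    have "N (R x) = (\<Sum>n. (R ^^ Suc n) x)" unfolding N_def by (simp add: funpow_swap1)
    then show ?thesis using shift by simp
  qed
  show ?thesis
  proof (rule that)
    show "is_bounded_clinear N" using bounded_clinearI[OF linN bN] .
    show "N (x - R x) = x" for x using NR[of x] by (simp add: clinear_diff[OF linN])
    show "N x - R (N x) = x" for x using RN[of x] by simp
  qed
qed

definition has_bounded_inverse :: "('a::complex_inner \<Rightarrow> 'a) \<Rightarrow> bool" where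
  "has_bounded_inverse A \<longleftrightarrow> (\<exists>S. is_bounded_clinear S \<and> (\<forall>x. S (A x) = x) \<and> (\<forall>x. A (S x) = x))"

lemma op_spectrum_iff:
  "l \<in> op_spectrum T \<longleftrightarrow> \<not> has_bounded_inverse (\<lambda>x. T x - l *\<^sub>C x)"
  by (simp add: op_spectrum_def has_bounded_inverse_def)

text \<open>\<open>A + B = A (I + S B)\<close> with \<open>S = A\<inverse>\<close>, and \<open>I + S B\<close> is inverted by a Neumann series.\<close>

lemma has_bounded_inverse_perturbation:
  fixes A B :: "'a::chilbert_space \<Rightarrow> 'a"
  assumes linA: "is_clinear A"
    and S: "is_bounded_clinear S" "\<And>x. S (A x) = x" "\<And>x. A (S x) = x"
    and C: "\<And>x. norm (S x) \<le> C * norm x" "C \<ge> 0"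
    and linB: "is_clinear B" and b: "\<And>x. norm (B x) \<le> b * norm x" "b \<ge> 0"
    and small: "C * b < 1"
  shows "has_bounded_inverse (\<lambda>x. A x + B x)"
proof -
  have linS: "is_clinear S" using S(1) by (rule bounded_clinear_imp_clinear)
  define R where "R x = - S (B x)" for x
  have linR: "is_clinear R"
    unfolding R_def is_clinear_def
    by (simp add: clinear_add[OF linB] clinear_add[OF linS] clinear_scaleC[OF linB]
        clinear_scaleC[OF linS] scaleC_minus_right)
  have bR: "norm (R x) \<le> (C * b) * norm x" for x
  proof -
    have "norm (R x) \<le> C * norm (B x)" using C(1)[of "B x"] by (simp add: R_def)
    also have "\<dots> \<le> C * (b * norm x)" using b(1) C(2) by (rule mult_left_mono)
    finally show ?thesis by (simp add: mult.assoc)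
  qed
  obtain N where N: "is_bounded_clinear N" "\<And>x. N (x - R x) = x" "\<And>x. N x - R (N x) = x"
    using neumann_series_inverse[OF linR bR _ small] C(2) b(2) by auto
  have "is_bounded_clinear (\<lambda>y. N (S y))" using N(1) S(1) by (rule bounded_clinear_compose)
  moreover have "N (S (A x + B x)) = x" for x
    using N(2)[of x] by (simp add: clinear_add[OF linS] S(2) R_def)
  moreover have "A (N (S y)) + B (N (S y)) = y" for y
  proof -
    have "N (S y) + S (B (N (S y))) = S y" using N(3)[of "S y"] by (simp add: R_def)
    then have "A (N (S y)) + A (S (B (N (S y)))) = A (S y)" by (metis clinear_add[OF linA])
    then show ?thesis by (simp add: S(3))
  qed
  ultimately show ?thesis unfolding has_bounded_inverse_def by blast
qed

lemma clinear_scaleC_ident: "is_clinear (\<lambda>x::'a::complex_vector. c *\<^sub>C x)"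
  by (simp add: is_clinear_def scaleC_add_right scaleC_scaleC mult.commute)

lemma spectrum_closed:
  fixes T :: "'a::chilbert_space \<Rightarrow> 'a"
  assumes bT: "is_bounded_clinear T"
  shows "closed (op_spectrum T)"
  unfolding closed_def open_contains_ball
proof
  fix l assume "l \<in> - op_spectrum T"
  then obtain S where S: "is_bounded_clinear S" "\<And>x. S (T x - l *\<^sub>C x) = x" "\<And>x. T (S x) - l *\<^sub>C S x = x"
    by (auto simp: op_spectrum_iff has_bounded_inverse_def)
  obtain C where C: "C \<ge> 0" "\<And>x. norm (S x) \<le> C * norm x" using bounded_clinear_bound[OF S(1)] by blast
  have linA: "is_clinear (\<lambda>x. T x - l *\<^sub>C x)"
    by (rule clinear_compose_diff[OF bounded_clinear_imp_clinear[OF bT] clinear_scaleC_ident])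
  have "m \<notin> op_spectrum T" if "m \<in> ball l (1 / (C + 1))" for m
  proof -
    have "C * cmod (l - m) \<le> C * (1 / (C + 1))"
      using that C(1) by (intro mult_left_mono) (auto simp: dist_norm)
    also have "\<dots> < 1" using C(1) by (simp add: field_simps)
    finally have small: "C * cmod (l - m) < 1" .
    have "has_bounded_inverse (\<lambda>x. (T x - l *\<^sub>C x) + (l - m) *\<^sub>C x)"
      by (rule has_bounded_inverse_perturbation[OF linA S C(2) C(1) clinear_scaleC_ident _ _ small])
         (simp_all add: norm_scaleC)
    then show ?thesis by (simp add: op_spectrum_iff scaleC_diff_left)
  qed
  moreover have "1 / (C + 1) > 0" using C(1) by simp
  ultimately show "\<exists>e>0. ball l e \<subseteq> - op_spectrum T" by blast
qed

lemma spectrum_subset_cball: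
  fixes T :: "'a::chilbert_space \<Rightarrow> 'a"
  assumes bT: "is_bounded_clinear T" and K: "\<And>x. norm (T x) \<le> K * norm x" "K \<ge> 0"
  shows "op_spectrum T \<subseteq> cball 0 K"
proof
  fix l assume "l \<in> op_spectrum T"
  show "l \<in> cball 0 K"
  proof (rule ccontr)
    assume "l \<notin> cball 0 K"
    then have lK: "cmod l > K" by simp
    then have "l \<noteq> 0" using K(2) by auto
    have "has_bounded_inverse (\<lambda>x. (- l) *\<^sub>C x + T x)"
    proof (rule has_bounded_inverse_perturbation[where S="\<lambda>y. (- 1 / l) *\<^sub>C y" and C="1 / cmod l"])
      show "is_bounded_clinear (\<lambda>y. (- 1 / l) *\<^sub>C y)"
        by (rule bounded_clinearI[OF clinear_scaleC_ident, where K="1 / cmod l"])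
           (simp add: norm_scaleC norm_divide scaleC_minus_left)
      show "(- 1 / l) *\<^sub>C (- l) *\<^sub>C x = x" "(- l) *\<^sub>C (- 1 / l) *\<^sub>C x = x" for x :: 'a
        using \<open>l \<noteq> 0\<close> by (simp_all add: scaleC_scaleC scaleC_one)
      show "norm ((- 1 / l) *\<^sub>C x) \<le> 1 / cmod l * norm x" for x :: 'a
        by (simp add: norm_scaleC norm_divide scaleC_minus_left)
      show "1 / cmod l * K < 1" using lK K(2) by (simp add: divide_less_eq)
    qed (use K bT clinear_scaleC_ident bounded_clinear_imp_clinear in auto)
    then show False
      using \<open>l \<in> op_spectrum T\<close> by (simp add: op_spectrum_iff scaleC_minus_left add.commute)
  qed
qed

section \<open>Projection-valued measures\<close>

lemma sigma_algebra_borel: "sigma_algebra (UNIV::complex set) (sets borel)"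
  using sets.sigma_algebra_axioms[of borel] by simp

lemma indicator_complex: "(indicator A z :: complex) = complex_of_real (indicator A z)"
  by (simp add: indicator_def)

locale proj_valued_measure =
  fixes E :: "complex set \<Rightarrow> 'h::chilbert_space \<Rightarrow> 'h"
  assumes orth_proj: "A \<in> sets borel \<Longrightarrow> is_orth_proj (E A)"
    and empty: "E {} = (\<lambda>x. 0)" and univ: "E UNIV = id"
    and inter: "A \<in> sets borel \<Longrightarrow> B \<in> sets borel \<Longrightarrow> E (A \<inter> B) = E A \<circ> E B"
    and sums_E: "range F \<subseteq> sets borel \<Longrightarrow> disjoint_family F \<Longrightarrow> (\<lambda>n. E (F n) x) sums E (\<Union>n. F n) x"

lemma spectral_measure_imp_proj_valued_measure:
  "spectral_measure_of T E \<Longrightarrow> proj_valued_measure E"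
  unfolding spectral_measure_of_def proj_valued_measure_def by blast

context proj_valued_measure begin

lemma E_clinear: "A \<in> sets borel \<Longrightarrow> is_clinear (E A)"
  using orth_proj orth_proj_clinear by blast

lemma E_E:
  "A \<in> sets borel \<Longrightarrow> B \<in> sets borel \<Longrightarrow> E A (E B x) = E (A \<inter> B) x"
  using inter by simp

lemma E_empty [simp]: "E {} x = 0"
  using empty by simp

lemma E_UNIV [simp]: "E UNIV x = x"
  using univ by simp

lemma E_union:
  assumes "A \<in> sets borel" "B \<in> sets borel" "A \<inter> B = {}"
  shows "E (A \<union> B) x = E A x + E B x"
proof -
  define F where "F n = (if n = 0 then A else if n = 1 then B else {})" for n :: nat
  have "range F \<subseteq> sets borel" using assms by (auto simp: F_def)
  moreover have "disjoint_family F" using assms by (auto simp: disjoint_family_on_def F_def)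
  ultimately have s1: "(\<lambda>n. E (F n) x) sums E (\<Union>n. F n) x" by (rule sums_E)
  have U: "(\<Union>n. F n) = A \<union> B"
  proof
    show "(\<Union>n. F n) \<subseteq> A \<union> B" by (auto simp: F_def split: if_splits)
    show "A \<union> B \<subseteq> (\<Union>n. F n)" using UN_upper[of 0 UNIV F] UN_upper[of 1 UNIV F] by (auto simp: F_def)
  qed
  have s2: "(\<lambda>n. E (F n) x) sums (\<Sum>n\<in>{0,1}. E (F n) x)"
    by (rule sums_finite) (auto simp: F_def)
  show ?thesis using sums_unique2[OF s1 s2] U by (simp add: F_def)
qed

lemma cinner_E_disjoint:
  assumes "A \<in> sets borel" "B \<in> sets borel" "A \<inter> B = {}"
  shows "cinner (E A x) (E B y) = 0"
  using assms by (simp add: orth_proj_adjoint[OF orth_proj] E_E)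

lemma cinner_E_self:
  "A \<in> sets borel \<Longrightarrow> cinner x (E A x) = complex_of_real ((norm (E A x))\<^sup>2)"
  using cinner_orth_proj_self[OF orth_proj] by blast

lemma E_restrict:
  assumes S: "S \<in> sets borel" and n: "\<And>x. E (- S) x = 0" and A: "A \<in> sets borel"
  shows "E A x = E (A \<inter> S) x"
proof -
  have "E A x = E ((A \<inter> S) \<union> (A \<inter> - S)) x" by (rule arg_cong[where f="\<lambda>B. E B x"]) blast
  also have "\<dots> = E (A \<inter> S) x + E (A \<inter> - S) x" using S A by (intro E_union) auto
  also have "E (A \<inter> - S) x = 0" using S A by (simp flip: E_E add: n clinear_zero[OF E_clinear])
  finally show ?thesis by simp
qed

lemma E_UN_finite:
  assumes "finite I" "\<And>i. i \<in> I \<Longrightarrow> A i \<in> sets borel" "disjoint_family_on A I"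
  shows "E (\<Union>i\<in>I. A i) x = (\<Sum>i\<in>I. E (A i) x)"
  using assms
proof (induction I rule: finite_induct)
  case (insert j I)
  have "E (\<Union>i\<in>insert j I. A i) x = E (A j \<union> (\<Union>i\<in>I. A i)) x" by simp
  also have "\<dots> = E (A j) x + E (\<Union>i\<in>I. A i) x"
    using insert.prems insert.hyps
    by (intro E_union) (auto simp: disjoint_family_on_def)
  also have "E (\<Union>i\<in>I. A i) x = (\<Sum>i\<in>I. E (A i) x)"
    using insert by (auto simp: disjoint_family_on_def)
  finally show ?case using insert.hyps by simp
qed simp

lemma power2_norm_E_union:
  assumes "A \<in> sets borel" "B \<in> sets borel" "A \<inter> B = {}"
  shows "(norm (E (A \<union> B) x))\<^sup>2 = (norm (E A x))\<^sup>2 + (norm (E B x))\<^sup>2"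
  using assms by (simp add: E_union power2_norm_add cinner_E_disjoint)

lemma power2_norm_E_UN_lessThan:
  fixes F :: "nat \<Rightarrow> complex set"
  assumes "range F \<subseteq> sets borel" "disjoint_family F"
  shows "(\<Sum>i<n. (norm (E (F i) x))\<^sup>2) = (norm (E (\<Union>i<n. F i) x))\<^sup>2"
proof (induction n)
  case (Suc n)
  have "(\<Union>i<Suc n. F i) = F n \<union> (\<Union>i<n. F i)" by (auto simp: lessThan_Suc)
  moreover have "F n \<inter> (\<Union>i<n. F i) = {}"
  proof -
    have "F n \<inter> F i = {}" if "i < n" for i
      using assms(2) that by (intro disjoint_family_onD) auto
    then show ?thesis by blast
  qed
  moreover have "(\<Union>i<n. F i) \<in> sets borel" using assms(1) by auto
  ultimately have "(norm (E (\<Union>i<Suc n. F i) x))\<^sup>2 = (norm (E (F n) x))\<^sup>2 + (norm (E (\<Union>i<n. F i) x))\<^sup>2"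
    using assms(1) by (simp add: power2_norm_E_union)
  then show ?case using Suc by simp
qed simp

lemma power2_norm_E_sums:
  fixes F :: "nat \<Rightarrow> complex set"
  assumes "range F \<subseteq> sets borel" "disjoint_family F"
  shows "(\<lambda>i. (norm (E (F i) x))\<^sup>2) sums (norm (E (\<Union>i. F i) x))\<^sup>2"
proof -
  have "(\<lambda>n. \<Sum>i<n. E (F i) x) \<longlonglongrightarrow> E (\<Union>i. F i) x" using sums_E[OF assms] by (simp add: sums_def)
  then have "(\<lambda>n. (norm (\<Sum>i<n. E (F i) x))\<^sup>2) \<longlonglongrightarrow> (norm (E (\<Union>i. F i) x))\<^sup>2"
    by (intro tendsto_intros)
  moreover have "(\<Sum>i<n. E (F i) x) = E (\<Union>i<n. F i) x" for n
    using assms by (subst E_UN_finite) (auto simp: disjoint_family_on_def)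
  ultimately show ?thesis using power2_norm_E_UN_lessThan[OF assms] by (simp add: sums_def)
qed

definition mu :: "'h \<Rightarrow> complex measure" where
  "mu x = spectral_mu E x"

lemma sets_mu [simp]: "sets (mu x) = sets borel"
  by (simp add: mu_def spectral_mu_def sigma_algebra.sets_measure_of_eq[OF sigma_algebra_borel])

lemma space_mu [simp]: "space (mu x) = UNIV"
  by (simp add: mu_def spectral_mu_def sigma_algebra.space_measure_of_eq[OF sigma_algebra_borel])

lemma emeasure_mu:
  assumes "A \<in> sets borel"
  shows "emeasure (mu x) A = ennreal ((norm (E A x))\<^sup>2)"
  unfolding mu_def spectral_mu_def
proof (rule emeasure_measure_of_sigma[OF sigma_algebra_borel _ _ assms])
  show "positive (sets borel) (\<lambda>A. ennreal ((norm (E A x))\<^sup>2))"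
    by (simp add: positive_def)
  show "countably_additive (sets borel) (\<lambda>A. ennreal ((norm (E A x))\<^sup>2))"
    unfolding countably_additive_def
  proof (intro allI impI)
    fix F :: "nat \<Rightarrow> complex set"
    assume F: "range F \<subseteq> sets borel" "disjoint_family F" "\<Union> (range F) \<in> sets borel"
    have s: "(\<lambda>i. (norm (E (F i) x))\<^sup>2) sums (norm (E (\<Union>i. F i) x))\<^sup>2"
      using power2_norm_E_sums F by blast
    show "(\<Sum>i. ennreal ((norm (E (F i) x))\<^sup>2)) = ennreal ((norm (E (\<Union> (range F)) x))\<^sup>2)"
    proof -
      have "(\<Sum>i. ennreal ((norm (E (F i) x))\<^sup>2)) = ennreal (\<Sum>i. (norm (E (F i) x))\<^sup>2)"
        by (rule suminf_ennreal2) (auto intro: sums_summable[OF s])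
      also have "(\<Sum>i. (norm (E (F i) x))\<^sup>2) = (norm (E (\<Union>i. F i) x))\<^sup>2"
        by (rule sums_unique[OF s, symmetric])
      finally show ?thesis .
    qed
  qed
qed

lemma finite_measure_mu: "finite_measure (mu x)"
proof (rule finite_measureI)
  have "emeasure (mu x) UNIV = ennreal ((norm (E UNIV x))\<^sup>2)" by (rule emeasure_mu) simp
  then show "emeasure (mu x) (space (mu x)) \<noteq> \<infinity>" by simp
qed

lemma measure_mu: "A \<in> sets borel \<Longrightarrow> measure (mu x) A = (norm (E A x))\<^sup>2"
  by (simp add: measure_def emeasure_mu)

lemma measure_mu_UNIV: "measure (mu x) UNIV = (norm x)\<^sup>2"
  by (simp add: measure_mu)

definition finite_resolution :: "'i set \<Rightarrow> ('i \<Rightarrow> complex set) \<Rightarrow> bool" where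
  "finite_resolution I A \<longleftrightarrow> finite I \<and> (\<forall>i\<in>I. A i \<in> sets borel) \<and> disjoint_family_on A I \<and>
     (\<forall>x. (\<Sum>i\<in>I. E (A i) x) = x)"

definition step_op :: "'i set \<Rightarrow> ('i \<Rightarrow> complex set) \<Rightarrow> ('i \<Rightarrow> complex) \<Rightarrow> 'h \<Rightarrow> 'h" where
  "step_op I A c x = (\<Sum>i\<in>I. c i *\<^sub>C E (A i) x)"

lemma E_resolution:
  assumes "finite_resolution I A" "i \<in> I" "j \<in> I"
  shows "E (A i) (E (A j) x) = (if i = j then E (A i) x else 0)"
proof -
  have b: "A i \<in> sets borel" "A j \<in> sets borel" using assms by (auto simp: finite_resolution_def)
  show ?thesis
  proof (cases "i = j")
    case True then show ?thesis using b by (simp add: E_E)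
  next
    case False
    then have "A i \<inter> A j = {}" using assms by (auto simp: finite_resolution_def disjoint_family_on_def)
    then show ?thesis using b False by (simp add: E_E)
  qed
qed

lemma step_op_clinear:
  assumes "finite_resolution I A"
  shows "is_clinear (step_op I A c)"
proof -
  have l: "is_clinear (E (A i))" if "i \<in> I" for i using assms that E_clinear by (auto simp: finite_resolution_def)
  show ?thesis unfolding is_clinear_def step_op_def
    using l by (auto simp: clinear_add clinear_scaleC scaleC_add_right scaleC_scaleC mult.commute
        sum.distrib scaleC_sum_right intro!: sum.cong)
qed

lemma E_step_op:
  assumes "finite_resolution I A" "j \<in> I"
  shows "E (A j) (step_op I A c x) = c j *\<^sub>C E (A j) x"
proof -
  have l: "is_clinear (E (A j))" using assms E_clinear by (auto simp: finite_resolution_def)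
  have "E (A j) (step_op I A c x) = (\<Sum>i\<in>I. c i *\<^sub>C E (A j) (E (A i) x))"
    unfolding step_op_def by (simp add: clinear_sum[OF l] clinear_scaleC[OF l])
  also have "\<dots> = (\<Sum>i\<in>I. if i = j then c j *\<^sub>C E (A j) x else 0)"
    using assms by (intro sum.cong) (auto simp: E_resolution)
  also have "\<dots> = c j *\<^sub>C E (A j) x" using assms by (simp add: finite_resolution_def)
  finally show ?thesis .
qed

lemma step_op_step_op:
  assumes "finite_resolution I A"
  shows "step_op I A c (step_op I A d x) = step_op I A (\<lambda>i. c i * d i) x"
  unfolding step_op_def[of I A c]
  using assms by (simp add: E_step_op scaleC_scaleC) (simp add: step_op_def)

lemma step_op_one:
  assumes "finite_resolution I A"
  shows "step_op I A (\<lambda>i. 1) x = x"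
  using assms by (simp add: step_op_def finite_resolution_def scaleC_one)

lemma funpow_step_op:
  assumes "finite_resolution I A"
  shows "(step_op I A c ^^ n) x = step_op I A (\<lambda>i. c i ^ n) x"
proof (induction n arbitrary: x)
  case 0 then show ?case using step_op_one[OF assms] by simp
next
  case (Suc n)
  have "(step_op I A c ^^ Suc n) x = step_op I A c ((step_op I A c ^^ n) x)" by simp
  also have "\<dots> = step_op I A (\<lambda>i. c i * c i ^ n) x" using Suc step_op_step_op[OF assms] by simp
  finally show ?case by simp
qed

lemma cinner_step_op:
  assumes "finite_resolution I A"
  shows "cinner (step_op I A c x) (step_op I A d x) = (\<Sum>i\<in>I. cnj (c i) * d i * complex_of_real ((norm (E (A i) x))\<^sup>2))"
proof -
  have "cinner (E (A i) x) (step_op I A d x) = d i * complex_of_real ((norm (E (A i) x))\<^sup>2)" if "i \<in> I" for i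
  proof -
    have "A i \<in> sets borel" using assms that by (simp add: finite_resolution_def)
    then show ?thesis
      using that by (simp add: orth_proj_adjoint[OF orth_proj] E_step_op[OF assms] cinner_scaleC_right cinner_E_self)
  qed
  then show ?thesis
    unfolding step_op_def[of I A c] by (simp add: cinner_sum_left cinner_scaleC_left mult.assoc)
qed

lemma cinner_self_step_op:
  assumes "finite_resolution I A"
  shows "cinner x (step_op I A c x) = (\<Sum>i\<in>I. c i * complex_of_real ((norm (E (A i) x))\<^sup>2))"
proof -
  have b: "A i \<in> sets borel" if "i \<in> I" for i using assms that by (auto simp: finite_resolution_def)
  show ?thesis unfolding step_op_def
    by (simp add: cinner_sum_right cinner_scaleC_right cinner_E_self b)
qed

lemma op_exp_step_op:
  assumes "finite_resolution I A"
  shows "op_exp (step_op I A c) x = step_op I A (\<lambda>i. exp (c i)) x"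
proof -
  have "op_exp (step_op I A c) x = (\<Sum>n. (1 / fact n) *\<^sub>R step_op I A (\<lambda>i. c i ^ n) x)"
    unfolding op_exp_def by (simp add: funpow_step_op[OF assms])
  also have "\<dots> = (\<Sum>n. \<Sum>i\<in>I. (c i ^ n /\<^sub>R fact n) *\<^sub>C E (A i) x)"
    unfolding step_op_def by (simp add: scaleR_scaleC scaleC_sum_right scaleC_scaleC scaleR_conv_of_real field_simps)
  also have "\<dots> = (\<Sum>i\<in>I. \<Sum>n. (c i ^ n /\<^sub>R fact n) *\<^sub>C E (A i) x)"
  proof (rule suminf_sum)
    fix i show "summable (\<lambda>n. (c i ^ n /\<^sub>R fact n) *\<^sub>C E (A i) x)"
      using bounded_linear.summable[OF bounded_linear_scaleC_left summable_exp_generic] by blast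
  qed
  also have "\<dots> = (\<Sum>i\<in>I. exp (c i) *\<^sub>C E (A i) x)"
  proof (rule sum.cong[OF refl])
    fix i
    show "(\<Sum>n. (c i ^ n /\<^sub>R fact n) *\<^sub>C E (A i) x) = exp (c i) *\<^sub>C E (A i) x"
    proof -
      have "(\<Sum>n. (c i ^ n /\<^sub>R fact n) *\<^sub>C E (A i) x) = (\<Sum>n. c i ^ n /\<^sub>R fact n) *\<^sub>C E (A i) x"
        by (rule bounded_linear.suminf[OF bounded_linear_scaleC_left summable_exp_generic, symmetric])
      then show ?thesis by (simp add: exp_def)
    qed
  qed
  finally show ?thesis by (simp add: step_op_def)
qed

lemma measurable_mu:
  "f \<in> borel_measurable borel \<Longrightarrow> f \<in> borel_measurable (mu x)"
  using measurable_cong_sets[OF sets_mu[of x, symmetric] refl] by blast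

lemma integrable_indicator_mu:
  "A \<in> sets borel \<Longrightarrow> integrable (mu x) (\<lambda>z. (c::complex) * indicator A z)"
  by (rule finite_measure.integrable_const_bound[OF finite_measure_mu, where B="cmod c"])
     (auto simp: indicator_def intro!: measurable_mu)

lemma integral_indicator_mu:
  "A \<in> sets borel \<Longrightarrow> integral\<^sup>L (mu x) (\<lambda>z. (c::complex) * indicator A z) = c * complex_of_real ((norm (E A x))\<^sup>2)"
  by (simp add: indicator_complex measure_mu)

lemma cinner_self_step_op_integral:
  assumes "finite_resolution I A"
  shows "cinner x (step_op I A c x) = integral\<^sup>L (mu x) (\<lambda>z. \<Sum>i\<in>I. c i * indicator (A i) z)"
proof -
  have b: "A i \<in> sets borel" if "i \<in> I" for i using assms that by (auto simp: finite_resolution_def)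
  have "integral\<^sup>L (mu x) (\<lambda>z. \<Sum>i\<in>I. c i * indicator (A i) z) = (\<Sum>i\<in>I. integral\<^sup>L (mu x) (\<lambda>z. c i * indicator (A i) z))"
    by (rule Bochner_Integration.integral_sum) (simp add: integrable_indicator_mu b)
  also have "\<dots> = (\<Sum>i\<in>I. c i * complex_of_real ((norm (E (A i) x))\<^sup>2))"
  proof (intro sum.cong refl)
    fix i assume "i \<in> I"
    then show "integral\<^sup>L (mu x) (\<lambda>z. c i * indicator (A i) z) = c i * complex_of_real ((norm (E (A i) x))\<^sup>2)"
      using integral_indicator_mu[OF b] by blast
  qed
  finally show ?thesis using cinner_self_step_op[OF assms] by simp
qed

lemma integrable_step_function:
  assumes "finite_resolution I A"
  shows "integrable (mu x) (\<lambda>z. \<Sum>i\<in>I. (c i :: complex) * indicator (A i) z)"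
  by (rule Bochner_Integration.integrable_sum, rule integrable_indicator_mu) (use assms in \<open>auto simp: finite_resolution_def\<close>)

end

section \<open>The operator exponential\<close>

lemma norm_funpow_diff_le:
  fixes A B :: "'a::complex_inner \<Rightarrow> 'a"
  assumes linA: "is_clinear A" and bA: "\<And>v. norm (A v) \<le> M * norm v" and bB: "\<And>v. norm (B v) \<le> M * norm v"
    and M: "M \<ge> 0" and d: "\<And>v. norm (A v - B v) \<le> e * norm v" and e: "e \<ge> 0"
  shows "norm ((A ^^ n) x - (B ^^ n) x) \<le> real n * M ^ (n - 1) * e * norm x"
proof (induction n)
  case (Suc n)
  have eq: "(A ^^ Suc n) x - (B ^^ Suc n) x = A ((A ^^ n) x - (B ^^ n) x) + (A ((B ^^ n) x) - B ((B ^^ n) x))"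
    by (simp add: clinear_diff[OF linA])
  have "norm ((A ^^ Suc n) x - (B ^^ Suc n) x) \<le> norm (A ((A ^^ n) x - (B ^^ n) x)) + norm (A ((B ^^ n) x) - B ((B ^^ n) x))"
    unfolding eq by (rule norm_triangle_ineq)
  also have "\<dots> \<le> M * (real n * M ^ (n - 1) * e * norm x) + e * (M ^ n * norm x)"
  proof (rule add_mono)
    show "norm (A ((A ^^ n) x - (B ^^ n) x)) \<le> M * (real n * M ^ (n - 1) * e * norm x)"
      using bA[of "(A ^^ n) x - (B ^^ n) x"] Suc M by (meson mult_left_mono order.trans)
    show "norm (A ((B ^^ n) x) - B ((B ^^ n) x)) \<le> e * (M ^ n * norm x)"
      using d[of "(B ^^ n) x"] norm_funpow_le[OF bB M, of n x] e by (meson mult_left_mono order.trans)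
  qed
  also have "\<dots> = real (Suc n) * M ^ (Suc n - 1) * e * norm x"
    by (cases n) (simp_all add: algebra_simps)
  finally show ?case .
qed simp

lemma summable_op_exp:
  fixes A :: "'a::chilbert_space \<Rightarrow> 'a"
  assumes bA: "\<And>v. norm (A v) \<le> M * norm v" and M: "M \<ge> 0"
  shows "summable (\<lambda>n. (1 / fact n) *\<^sub>R (A ^^ n) x)"
proof (rule summable_comparison_test[of _ "\<lambda>n. M ^ n / fact n * norm x"])
  show "\<exists>N. \<forall>n\<ge>N. norm ((1 / fact n) *\<^sub>R (A ^^ n) x) \<le> M ^ n / fact n * norm x"
    using norm_funpow_le[OF bA M] by (auto simp: divide_right_mono mult.commute intro!: exI[of _ 0])
  show "summable (\<lambda>n. M ^ n / fact n * norm x)"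
    using summable_exp[of M] by (intro summable_mult2) (simp add: divide_inverse mult.commute)
qed

lemma sums_exp_real: "(\<lambda>n. (M::real) ^ n / fact n) sums exp M"
  using exp_converges[of M] by (simp add: divide_inverse mult.commute)

lemma norm_op_exp_le:
  fixes A :: "'a::chilbert_space \<Rightarrow> 'a"
  assumes bA: "\<And>v. norm (A v) \<le> M * norm v" and M: "M \<ge> 0"
  shows "norm (op_exp A x) \<le> exp M * norm x"
proof -
  have "norm (op_exp A x) \<le> (\<Sum>n. M ^ n / fact n * norm x)"
    unfolding op_exp_def
    using norm_funpow_le[OF bA M] summable_exp[of M]
    by (intro norm_suminf_le) (auto simp: divide_right_mono mult.commute divide_inverse intro: summable_mult2)
  also have "\<dots> = exp M * norm x"
    using sums_unique[OF sums_mult2[OF sums_exp_real[of M], where c="norm x"]] by simp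
  finally show ?thesis .
qed

lemma op_exp_clinear:
  fixes A :: "'a::chilbert_space \<Rightarrow> 'a"
  assumes linA: "is_clinear A" and bA: "\<And>v. norm (A v) \<le> M * norm v" and M: "M \<ge> 0"
  shows "is_clinear (op_exp A)"
  unfolding is_clinear_def
proof (intro conjI allI)
  note s = summable_op_exp[OF bA M]
  have l: "is_clinear (A ^^ n)" for n using clinear_funpow[OF linA] .
  fix x y
  show "op_exp A (x + y) = op_exp A x + op_exp A y"
    unfolding op_exp_def using suminf_add[OF s[of x] s[of y]]
    by (simp add: clinear_add[OF l] scaleR_add_right)
next
  note s = summable_op_exp[OF bA M]
  have l: "is_clinear (A ^^ n)" for n using clinear_funpow[OF linA] .
  fix c x
  show "op_exp A (c *\<^sub>C x) = c *\<^sub>C op_exp A x"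
    unfolding op_exp_def using bounded_linear.suminf[OF bounded_linear_scaleC_right[of c] s[of x]]
    by (simp add: clinear_scaleC[OF l] scaleR_scaleC scaleC_scaleC mult.commute)
qed

lemma sums_exp_real_derivative: "(\<lambda>n. real n * M ^ (n - 1) / fact n) sums exp M"
proof -
  have "(\<lambda>n. real (Suc n) * M ^ (Suc n - 1) / fact (Suc n)) = (\<lambda>n. M ^ n / fact n)"
    by (rule ext) (simp add: fact_Suc divide_simps del: of_nat_Suc)
  then show ?thesis using sums_exp_real[of M] sums_Suc_iff[of "\<lambda>n. real n * M ^ (n - 1) / fact n"] by simp
qed

text \<open>Summed termwise from \<open>\<parallel>A\<^sup>n - B\<^sup>n\<parallel> \<le> n M\<^sup>n\<^sup>-\<^sup>1 \<parallel>A - B\<parallel>\<close>, using \<open>\<Sum> n M\<^sup>n\<^sup>-\<^sup>1/n! = e\<^sup>M\<close>.\<close>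

lemma norm_op_exp_diff_le:
  fixes A B :: "'a::chilbert_space \<Rightarrow> 'a"
  assumes linA: "is_clinear A" and bA: "\<And>v. norm (A v) \<le> M * norm v" and bB: "\<And>v. norm (B v) \<le> M * norm v"
    and M: "M \<ge> 0" and d: "\<And>v. norm (A v - B v) \<le> e * norm v" and e: "e \<ge> 0"
  shows "norm (op_exp A x - op_exp B x) \<le> exp M * e * norm x"
proof -
  have "op_exp A x - op_exp B x = (\<Sum>n. (1 / fact n) *\<^sub>R ((A ^^ n) x - (B ^^ n) x))"
    unfolding op_exp_def
    using suminf_diff[OF summable_op_exp[OF bA M] summable_op_exp[OF bB M]]
    by (simp add: scaleR_diff_right)
  also have "norm \<dots> \<le> (\<Sum>n. real n * M ^ (n - 1) / fact n * (e * norm x))"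
  proof (rule norm_suminf_le)
    show "norm ((1 / fact n) *\<^sub>R ((A ^^ n) x - (B ^^ n) x)) \<le> real n * M ^ (n - 1) / fact n * (e * norm x)" for n
      using norm_funpow_diff_le[OF linA bA bB M d e, of n x]
      by (simp add: divide_right_mono mult.commute mult.left_commute divide_inverse mult_left_mono)
    show "summable (\<lambda>n. real n * M ^ (n - 1) / fact n * (e * norm x))"
      by (intro summable_mult2 sums_summable[OF sums_exp_real_derivative])
  qed
  also have "\<dots> = exp M * e * norm x"
    using sums_unique[OF sums_mult2[OF sums_exp_real_derivative[of M], where c="e * norm x"]] by (simp add: mult.assoc)
  finally show ?thesis .
qed

section \<open>Approximation by step operators\<close>

text \<open>The square grid of mesh \<open>1/(k+1)\<close>: \<open>grid_cell k i\<close> is the half-open square with lower left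
  corner \<open>grid_point k i\<close>, and \<open>grid_indices K k\<close> indexes enough cells to cover the disc of radius \<open>K\<close>.\<close>

definition grid_index :: "nat \<Rightarrow> complex \<Rightarrow> int \<times> int" where
  "grid_index k z = (\<lfloor>real (Suc k) * Re z\<rfloor>, \<lfloor>real (Suc k) * Im z\<rfloor>)"

definition grid_point :: "nat \<Rightarrow> int \<times> int \<Rightarrow> complex" where
  "grid_point k i = Complex (real_of_int (fst i) / real (Suc k)) (real_of_int (snd i) / real (Suc k))"

definition grid_cell :: "nat \<Rightarrow> int \<times> int \<Rightarrow> complex set" where
  "grid_cell k i = {z. grid_index k z = i}"

definition grid_radius :: "real \<Rightarrow> nat \<Rightarrow> int" where
  "grid_radius K k = \<lceil>real (Suc k) * K\<rceil> + 1"

definition grid_indices :: "real \<Rightarrow> nat \<Rightarrow> (int \<times> int) set" where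
  "grid_indices K k = {- grid_radius K k .. grid_radius K k} \<times> {- grid_radius K k .. grid_radius K k}"

lemma finite_grid_indices: "finite (grid_indices K k)"
  by (simp add: grid_indices_def)

lemma floor_mult_in_grid_range:
  assumes "\<bar>t\<bar> \<le> K"
  shows "\<lfloor>real (Suc k) * t\<rfloor> \<in> {- grid_radius K k .. grid_radius K k}"
proof -
  have a: "real (Suc k) * t \<le> real (Suc k) * K" using assms by (intro mult_left_mono) auto
  have b: "real (Suc k) * (- t) \<le> real (Suc k) * K" using assms by (intro mult_left_mono) auto
  have c: "real (Suc k) * K \<le> of_int \<lceil>real (Suc k) * K\<rceil>" by (rule le_of_int_ceiling)
  have f1: "of_int \<lfloor>real (Suc k) * t\<rfloor> \<le> real (Suc k) * t" by (rule of_int_floor_le)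
  have f2: "real (Suc k) * t < of_int \<lfloor>real (Suc k) * t\<rfloor> + 1" by (rule real_of_int_floor_add_one_gt)
  have "real_of_int \<lfloor>real (Suc k) * t\<rfloor> \<le> of_int (grid_radius K k)" "- real_of_int (grid_radius K k) \<le> of_int \<lfloor>real (Suc k) * t\<rfloor>"
    unfolding grid_radius_def of_int_add of_int_minus of_int_1 using a b c f1 f2 by linarith+
  then show ?thesis by simp
qed

lemma grid_index_in_grid_indices:
  "cmod z \<le> K \<Longrightarrow> grid_index k z \<in> grid_indices K k"
  using floor_mult_in_grid_range[of "Re z" K k] floor_mult_in_grid_range[of "Im z" K k] abs_Re_le_cmod[of z] abs_Im_le_cmod[of z]
  by (auto simp: grid_index_def grid_indices_def)

lemma norm_diff_grid_point_le: "cmod (z - grid_point k (grid_index k z)) \<le> 2 / real (Suc k)"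
proof -
  define s where "s = real (Suc k)"
  have s: "s > 0" by (simp add: s_def)
  have r: "\<bar>t - real_of_int \<lfloor>s * t\<rfloor> / s\<bar> \<le> 1 / s" for t
  proof -
    have "real_of_int \<lfloor>s * t\<rfloor> \<le> s * t" "s * t < real_of_int \<lfloor>s * t\<rfloor> + 1" by linarith+
    then have "0 \<le> s * t - real_of_int \<lfloor>s * t\<rfloor>" "s * t - real_of_int \<lfloor>s * t\<rfloor> \<le> 1" by linarith+
    moreover have "t - real_of_int \<lfloor>s * t\<rfloor> / s = (s * t - real_of_int \<lfloor>s * t\<rfloor>) / s"
      using s by (simp add: field_simps)
    ultimately show ?thesis using s by (simp add: divide_right_mono)
  qed
  have "cmod (z - grid_point k (grid_index k z)) \<le> \<bar>Re (z - grid_point k (grid_index k z))\<bar> + \<bar>Im (z - grid_point k (grid_index k z))\<bar>" by (rule cmod_le)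
  also have "\<dots> \<le> 1 / s + 1 / s"
    using r[of "Re z"] r[of "Im z"] by (simp add: grid_point_def grid_index_def s_def)
  finally show ?thesis by (simp add: s_def)
qed

lemma grid_cell_borel: "grid_cell k i \<in> sets borel"
proof -
  have "grid_cell k i = {z. real_of_int (fst i) \<le> real (Suc k) * Re z \<and> real (Suc k) * Re z < real_of_int (fst i) + 1
     \<and> real_of_int (snd i) \<le> real (Suc k) * Im z \<and> real (Suc k) * Im z < real_of_int (snd i) + 1}"
    by (auto simp: grid_cell_def grid_index_def prod_eq_iff floor_eq_iff)
  also have "\<dots> \<in> sets borel" by measurable
  finally show ?thesis .
qed

lemma disjoint_family_grid_cell: "disjoint_family_on (grid_cell k) I"
  by (auto simp: disjoint_family_on_def grid_cell_def)

lemma sum_grid_cell_indicator: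
  assumes "grid_index k z \<in> grid_indices K k"
  shows "(\<Sum>i\<in>grid_indices K k. f i * indicator (grid_cell k i) z) = (f (grid_index k z) :: complex)"
proof -
  have "(\<Sum>i\<in>grid_indices K k. f i * indicator (grid_cell k i) z) = (\<Sum>i\<in>grid_indices K k. if i = grid_index k z then f i else 0)"
    by (intro sum.cong refl) (auto simp: grid_cell_def indicator_def)
  also have "\<dots> = f (grid_index k z)" using assms finite_grid_indices by simp
  finally show ?thesis .
qed

lemma LIMSEQ_of_norm_diff_le_divide_Suc:
  fixes a :: "nat \<Rightarrow> 'a::real_normed_vector"
  assumes "\<And>k. norm (a k - L) \<le> C / real (Suc k)"
  shows "a \<longlonglongrightarrow> L"
proof -
  have "(\<lambda>k. C / real (Suc k)) \<longlonglongrightarrow> 0"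
    using tendsto_mult_right_zero[OF LIMSEQ_inverse_real_of_nat, of C] by (simp add: divide_inverse)
  then have "(\<lambda>k. a k - L) \<longlonglongrightarrow> 0"
    by (rule Lim_null_comparison[rotated]) (use assms in auto)
  then show ?thesis by (simp add: LIM_zero_iff)
qed

locale spectral_decomposition = proj_valued_measure E for E :: "complex set \<Rightarrow> 'h::chilbert_space \<Rightarrow> 'h" +
  fixes T :: "'h \<Rightarrow> 'h"
  assumes spectral: "spectral_measure_of T E" and T_bounded: "is_bounded_clinear T"
begin

definition op_bound :: real where
  "op_bound = (SOME K. K \<ge> 0 \<and> (\<forall>x. norm (T x) \<le> K * norm x))"

lemma op_bound: "op_bound \<ge> 0" "norm (T x) \<le> op_bound * norm x"
proof -
  have "\<exists>K. K \<ge> 0 \<and> (\<forall>x. norm (T x) \<le> K * norm x)" using bounded_clinear_bound[OF T_bounded] by metis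
  then have "op_bound \<ge> 0 \<and> (\<forall>x. norm (T x) \<le> op_bound * norm x)" unfolding op_bound_def by (rule someI_ex)
  then show "op_bound \<ge> 0" "norm (T x) \<le> op_bound * norm x" by auto
qed

lemma T_clinear: "is_clinear T"
  using T_bounded by (rule bounded_clinear_imp_clinear)

lemma spectrum_subset_cball_op_bound: "op_spectrum T \<subseteq> cball 0 op_bound"
  using spectrum_subset_cball[OF T_bounded op_bound(2) op_bound(1)] .

lemma spectrum_borel: "op_spectrum T \<in> sets borel"
  using spectrum_closed[OF T_bounded] by simp

lemma E_compl_spectrum: "E (- op_spectrum T) x = 0"
  using spectral by (simp add: spectral_measure_of_def)

lemma cinner_T_integral: "cinner x (T x) = integral\<^sup>L (mu x) (\<lambda>z. z)"
  using spectral by (simp add: spectral_measure_of_def mu_def)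

lemma AE_mu_spectrum: "AE z in mu x. z \<in> op_spectrum T"
proof (rule AE_I')
  show "- op_spectrum T \<in> null_sets (mu x)"
    using spectrum_borel by (auto simp: null_sets_def emeasure_mu E_compl_spectrum)
qed auto

lemma E_restrict_spectrum:
  "A \<in> sets borel \<Longrightarrow> E A x = E (A \<inter> op_spectrum T) x"
  using E_restrict[OF spectrum_borel E_compl_spectrum] by blast

lemma finite_resolution_grid: "finite_resolution (grid_indices op_bound k) (grid_cell k)"
  unfolding finite_resolution_def
proof (intro conjI allI ballI)
  show "finite (grid_indices op_bound k)" by (rule finite_grid_indices)
  show "grid_cell k i \<in> sets borel" for i by (rule grid_cell_borel)
  show "disjoint_family_on (grid_cell k) (grid_indices op_bound k)" by (rule disjoint_family_grid_cell)
  fix x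
  define S where "S = (\<Union>i\<in>grid_indices op_bound k. grid_cell k i)"
  have Sb: "S \<in> sets borel" unfolding S_def using grid_cell_borel finite_grid_indices by auto
  have DS: "op_spectrum T \<subseteq> S" unfolding S_def grid_cell_def using spectrum_subset_cball_op_bound grid_index_in_grid_indices by fastforce
  have "(\<Sum>i\<in>grid_indices op_bound k. E (grid_cell k i) x) = E S x"
    unfolding S_def by (rule E_UN_finite[symmetric]) (auto simp: finite_grid_indices grid_cell_borel disjoint_family_grid_cell)
  also have "\<dots> = E (op_spectrum T) x" using E_restrict_spectrum[OF Sb] DS by (simp add: Int_absorb1)
  also have "\<dots> = x" using E_restrict_spectrum[of UNIV x] by simp
  finally show "(\<Sum>i\<in>grid_indices op_bound k. E (grid_cell k i) x) = x" .
qed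

lemma integrable_mu_ident: "integrable (mu x) (\<lambda>z. z)"
proof (rule finite_measure.integrable_const_bound[OF finite_measure_mu, where B=op_bound])
  show "AE z in mu x. norm z \<le> op_bound" using AE_mu_spectrum[of x] by eventually_elim (use spectrum_subset_cball_op_bound in auto)
qed (simp add: measurable_mu)

definition grid_op :: "nat \<Rightarrow> 'h \<Rightarrow> 'h" where
  "grid_op k = step_op (grid_indices op_bound k) (grid_cell k) (grid_point k)"

definition grid_step :: "(complex \<Rightarrow> complex) \<Rightarrow> nat \<Rightarrow> complex \<Rightarrow> complex" where
  "grid_step g k z = (\<Sum>i\<in>grid_indices op_bound k. g (grid_point k i) * indicator (grid_cell k i) z)"

lemma grid_step_on_spectrum:
  "z \<in> op_spectrum T \<Longrightarrow> grid_step g k z = g (grid_point k (grid_index k z))"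
  unfolding grid_step_def
  by (rule sum_grid_cell_indicator) (use spectrum_subset_cball_op_bound grid_index_in_grid_indices in auto)

lemma integrable_grid_step: "integrable (mu x) (grid_step g k)"
  unfolding grid_step_def[abs_def] by (rule integrable_step_function[OF finite_resolution_grid])

lemma cinner_self_step_op_grid_step:
  "cinner x (step_op (grid_indices op_bound k) (grid_cell k) (\<lambda>i. g (grid_point k i)) x)
     = integral\<^sup>L (mu x) (grid_step g k)"
  unfolding grid_step_def[abs_def] by (rule cinner_self_step_op_integral[OF finite_resolution_grid])

text \<open>\<open>T\<close> is only known through its quadratic form, so the operator estimate is obtained from
  the numerical radius.\<close>

lemma norm_T_minus_grid_op_le: "norm (T v - grid_op k v) \<le> 8 / real (Suc k) * norm v"
proof -
  define d where "d = 2 / real (Suc k)"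
  have lin: "is_clinear (\<lambda>v. T v - grid_op k v)"
    unfolding grid_op_def by (intro clinear_compose_diff T_clinear step_op_clinear finite_resolution_grid)
  have "cmod (cinner w (T w - grid_op k w)) \<le> d * (norm w)\<^sup>2" for w
  proof -
    have "cinner w (T w - grid_op k w) = integral\<^sup>L (mu w) (\<lambda>z. z - grid_step (\<lambda>z. z) k z)"
      using cinner_T_integral[of w] cinner_self_step_op_grid_step[of w k "\<lambda>z. z"]
        integrable_mu_ident[of w] integrable_grid_step[of w "\<lambda>z. z" k]
      by (simp add: cinner_diff_right grid_op_def)
    also have "cmod \<dots> \<le> integral\<^sup>L (mu w) (\<lambda>z. cmod (z - grid_step (\<lambda>z. z) k z))"
      by (rule integral_norm_bound)
    also have "\<dots> \<le> integral\<^sup>L (mu w) (\<lambda>z. d)"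
    proof (rule integral_mono_AE)
      show "integrable (mu w) (\<lambda>z. cmod (z - grid_step (\<lambda>z. z) k z))"
        using integrable_mu_ident integrable_grid_step by auto
      show "integrable (mu w) (\<lambda>z. d)"
        by (rule finite_measure.integrable_const_bound[OF finite_measure_mu, where B="norm d"]) auto
      show "AE z in mu w. cmod (z - grid_step (\<lambda>z. z) k z) \<le> d"
        using AE_mu_spectrum[of w]
        by eventually_elim (use norm_diff_grid_point_le in \<open>simp add: grid_step_on_spectrum d_def\<close>)
    qed
    also have "\<dots> = d * (norm w)\<^sup>2" by (simp add: measure_mu_UNIV)
    finally show ?thesis .
  qed
  from norm_le_of_quadratic_form_le[OF lin this] show ?thesis by (simp add: d_def)
qed

lemma norm_grid_op_le: "norm (grid_op k v) \<le> (op_bound + 8) * norm v"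
proof -
  have "norm (grid_op k v) \<le> norm (T v) + norm (T v - grid_op k v)"
    using norm_triangle_sub[of "grid_op k v" "T v"] by (simp add: norm_minus_commute)
  also have "\<dots> \<le> op_bound * norm v + 8 * norm v"
  proof (rule add_mono)
    show "norm (T v) \<le> op_bound * norm v" by (rule op_bound)
    have "norm (T v - grid_op k v) \<le> 8 / real (Suc k) * norm v" by (rule norm_T_minus_grid_op_le)
    also have "\<dots> \<le> 8 * norm v" by (intro mult_right_mono) (auto simp: divide_le_eq)
    finally show "norm (T v - grid_op k v) \<le> 8 * norm v" .
  qed
  finally show ?thesis by (simp add: algebra_simps)
qed

lemma norm_T_le: "norm (T v) \<le> (op_bound + 8) * norm v"
proof -
  have "op_bound * norm v \<le> (op_bound + 8) * norm v" by (intro mult_right_mono) auto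
  then show ?thesis using op_bound(2)[of v] by linarith
qed

lemma tendsto_funpow_op_exp_grid_op:
  "(\<lambda>k. (op_exp (grid_op k) ^^ m) x) \<longlonglongrightarrow> (op_exp T ^^ m) x"
proof (rule LIMSEQ_of_norm_diff_le_divide_Suc)
  fix k
  define M where "M = op_bound + 8"
  have M0: "M \<ge> 0" using op_bound(1) by (simp add: M_def)
  have linU: "is_clinear (op_exp T)"
    by (rule op_exp_clinear[OF T_clinear norm_T_le]) (simp add: M0[unfolded M_def])
  have bU: "norm (op_exp T v) \<le> exp M * norm v" for v
    unfolding M_def by (rule norm_op_exp_le[OF norm_T_le]) (use op_bound(1) in simp)
  have bW: "norm (op_exp (grid_op k) v) \<le> exp M * norm v" for v
    unfolding M_def by (rule norm_op_exp_le[OF norm_grid_op_le]) (use op_bound(1) in simp)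
  have d: "norm (op_exp T v - op_exp (grid_op k) v) \<le> exp M * (8 / real (Suc k)) * norm v" for v
    unfolding M_def
    by (rule norm_op_exp_diff_le[OF T_clinear norm_T_le norm_grid_op_le])
       (use op_bound(1) norm_T_minus_grid_op_le in auto)
  have "norm ((op_exp T ^^ m) x - (op_exp (grid_op k) ^^ m) x)
      \<le> real m * exp M ^ (m - 1) * (exp M * (8 / real (Suc k))) * norm x"
    by (rule norm_funpow_diff_le[OF linU bU bW _ d]) auto
  then show "norm ((op_exp (grid_op k) ^^ m) x - (op_exp T ^^ m) x)
      \<le> (real m * exp M ^ (m - 1) * exp M * norm x * 8) / real (Suc k)"
    by (simp add: norm_minus_commute mult_ac)
qed

lemma funpow_op_exp_grid_op:
  "(op_exp (grid_op k) ^^ m) x = step_op (grid_indices op_bound k) (grid_cell k) (\<lambda>i. exp (grid_point k i) ^ m) x"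
proof -
  have "op_exp (grid_op k) = step_op (grid_indices op_bound k) (grid_cell k) (\<lambda>i. exp (grid_point k i))"
    by (rule ext) (simp add: grid_op_def op_exp_step_op[OF finite_resolution_grid])
  then show ?thesis by (simp add: funpow_step_op[OF finite_resolution_grid])
qed

lemma tendsto_integral_grid_step:
  assumes g: "continuous_on UNIV g"
  shows "(\<lambda>k. integral\<^sup>L (mu x) (grid_step g k)) \<longlonglongrightarrow> integral\<^sup>L (mu x) g"
proof -
  have "compact (g ` cball 0 (op_bound + 2))"
    by (intro compact_continuous_image continuous_on_subset[OF g]) auto
  then have "bounded (g ` cball 0 (op_bound + 2))" by (rule compact_imp_bounded)
  then obtain B where "\<forall>y \<in> g ` cball 0 (op_bound + 2). cmod y \<le> B" by (auto simp: bounded_iff)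
  then have B: "\<And>w. cmod w \<le> op_bound + 2 \<Longrightarrow> cmod (g w) \<le> B" by simp
  have near: "cmod (grid_point k (grid_index k z) - z) \<le> 2 / real (Suc k)" for k z
    using norm_diff_grid_point_le[of z k] by (simp add: norm_minus_commute)
  show ?thesis
  proof (rule integral_dominated_convergence[where w="\<lambda>z. B"])
    show "g \<in> borel_measurable (mu x)" using g by (intro measurable_mu borel_measurable_continuous_onI)
    show "grid_step g k \<in> borel_measurable (mu x)" for k
      by (rule borel_measurable_integrable[OF integrable_grid_step])
    show "integrable (mu x) (\<lambda>z. B)"
      by (rule finite_measure.integrable_const_bound[OF finite_measure_mu, where B="norm B"]) auto
    show "AE z in mu x. (\<lambda>k. grid_step g k z) \<longlonglongrightarrow> g z"
      using AE_mu_spectrum[of x]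
    proof eventually_elim
      case (elim z)
      have "(\<lambda>k. grid_point k (grid_index k z)) \<longlonglongrightarrow> z"
        by (rule LIMSEQ_of_norm_diff_le_divide_Suc[where C=2]) (rule near)
      then have "(\<lambda>k. g (grid_point k (grid_index k z))) \<longlonglongrightarrow> g z"
        using g by (intro isCont_tendsto_compose[of z g]) (simp_all add: continuous_on_eq_continuous_at)
      then show ?case using grid_step_on_spectrum[OF elim] by simp
    qed
    show "AE z in mu x. norm (grid_step g k z) \<le> B" for k
      using AE_mu_spectrum[of x]
    proof eventually_elim
      case (elim z)
      have "cmod (grid_point k (grid_index k z)) \<le> cmod z + cmod (grid_point k (grid_index k z) - z)"
        by (rule norm_triangle_sub)
      also have "\<dots> \<le> op_bound + 2"
      proof (rule add_mono)
        show "cmod z \<le> op_bound" using spectrum_subset_cball_op_bound elim by auto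
        show "cmod (grid_point k (grid_index k z) - z) \<le> 2"
          by (rule order_trans[OF near]) (simp add: divide_le_eq)
      qed
      finally show ?case using grid_step_on_spectrum[OF elim] B by simp
    qed
  qed
qed

text \<open>For the step operators \<open>grid_op k\<close> this identity is a finite computation; both sides are
  continuous in the limit \<open>k \<rightarrow> \<infinity>\<close>.\<close>

lemma cinner_funpow_op_exp_integral:
  "cinner ((op_exp T ^^ n) x) ((op_exp T ^^ m) x) = integral\<^sup>L (mu x) (\<lambda>z. cnj (exp z ^ n) * exp z ^ m)"
proof -
  define g where "g w = cnj (exp w ^ n) * exp w ^ m" for w
  have grid: "cinner ((op_exp (grid_op k) ^^ n) x) ((op_exp (grid_op k) ^^ m) x)
      = integral\<^sup>L (mu x) (grid_step g k)" for k
    unfolding funpow_op_exp_grid_op cinner_step_op[OF finite_resolution_grid]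
      cinner_self_step_op_grid_step[symmetric] cinner_self_step_op[OF finite_resolution_grid]
    by (simp add: g_def)
  have "(\<lambda>k. integral\<^sup>L (mu x) (grid_step g k)) \<longlonglongrightarrow> cinner ((op_exp T ^^ n) x) ((op_exp T ^^ m) x)"
    unfolding grid[symmetric] by (intro tendsto_cinner tendsto_funpow_op_exp_grid_op)
  moreover have "(\<lambda>k. integral\<^sup>L (mu x) (grid_step g k)) \<longlonglongrightarrow> integral\<^sup>L (mu x) g"
    unfolding g_def by (intro tendsto_integral_grid_step continuous_intros)
  ultimately have "cinner ((op_exp T ^^ n) x) ((op_exp T ^^ m) x) = integral\<^sup>L (mu x) g"
    by (rule LIMSEQ_unique)
  then show ?thesis unfolding g_def[abs_def] .
qed

end

section \<open>Measures determined by their moments\<close>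

lemma borel_measurable_sets_eq_borel:
  assumes "sets M = sets borel" "f \<in> borel_measurable borel" shows "f \<in> borel_measurable M"
  using measurable_cong_sets[OF assms(1) refl] assms(2) by blast

lemma complex_of_real_linear_eq:
  assumes "bounded_linear (p :: complex \<Rightarrow> real)"
  shows "complex_of_real (p w) = ((p 1 - \<i> * p \<i>) / 2) * w + ((p 1 + \<i> * p \<i>) / 2) * cnj w"
proof -
  interpret bounded_linear p by fact
  have "p w = p (Re w *\<^sub>R 1 + Im w *\<^sub>R \<i>)" by (rule arg_cong[where f=p]) (simp add: complex_eq_iff)
  also have "\<dots> = Re w * p 1 + Im w * p \<i>" by (simp add: add scale)
  finally have "p w = Re w * p 1 + Im w * p \<i>" .
  then show ?thesis by (simp add: complex_eq_iff algebra_simps) (simp add: field_simps)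
qed

lemma tendsto_cutoff_indicator:
  assumes F: "closed F" "F \<noteq> {}"
  shows "(\<lambda>j. max 0 (1 - real j * infdist w F)) \<longlonglongrightarrow> indicator F w"
proof (cases "w \<in> F")
  case True
  then show ?thesis by simp
next
  case False
  have d: "infdist w F > 0" using infdist_pos_not_in_closed[OF F False] by auto
  obtain N where N: "real N > 1 / infdist w F" using reals_Archimedean2 by blast
  have "max 0 (1 - real j * infdist w F) = 0" if "j \<ge> N" for j
  proof -
    have "1 < real N * infdist w F" using N d by (simp add: field_simps)
    also have "\<dots> \<le> real j * infdist w F" using that d by (intro mult_right_mono) auto
    finally show ?thesis by simp
  qed
  then have "\<forall>\<^sub>F j in sequentially. max 0 (1 - real j * infdist w F) = 0"
    by (auto simp: eventually_sequentially)
  then show ?thesis using False by (simp add: tendsto_eventually)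
qed

locale compact_support_measure =
  fixes M :: "complex measure" and R :: real
  assumes finite: "finite_measure M" and sets_eq: "sets M = sets borel"
    and support: "AE w in M. cmod w \<le> R"
begin

lemma integrable_continuous:
  fixes g :: "complex \<Rightarrow> 'b::{banach,second_countable_topology}"
  assumes g: "continuous_on UNIV g"
  shows "integrable M g"
proof -
  have "compact (g ` cball 0 R)" by (intro compact_continuous_image continuous_on_subset[OF g]) auto
  then have "bounded (g ` cball 0 R)" by (rule compact_imp_bounded)
  then obtain B where "\<forall>y\<in>g ` cball 0 R. norm y \<le> B" by (auto simp: bounded_iff)
  then have B: "\<And>w. w \<in> cball 0 R \<Longrightarrow> norm (g w) \<le> B" by blast
  show ?thesis
  proof (rule finite_measure.integrable_const_bound[OF finite, where B=B])
    show "AE w in M. norm (g w) \<le> B" using support by eventually_elim (auto intro: B)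
    show "g \<in> borel_measurable M"
      using g by (intro borel_measurable_sets_eq_borel[OF sets_eq] borel_measurable_continuous_onI)
  qed
qed

lemma abs_integral_diff_le:
  fixes f p :: "complex \<Rightarrow> real"
  assumes cf: "continuous_on UNIV f" and cp: "continuous_on UNIV p"
    and b: "\<And>w. w \<in> cball 0 R \<Longrightarrow> \<bar>f w - p w\<bar> < e"
  shows "\<bar>integral\<^sup>L M f - integral\<^sup>L M p\<bar> \<le> e * measure M (space M)"
proof -
  have i: "integrable M f" "integrable M p" using integrable_continuous cf cp by auto
  have "\<bar>integral\<^sup>L M f - integral\<^sup>L M p\<bar> = \<bar>integral\<^sup>L M (\<lambda>w. f w - p w)\<bar>"
    using i by simp
  also have "\<dots> \<le> integral\<^sup>L M (\<lambda>w. \<bar>f w - p w\<bar>)" by (rule integral_abs_bound)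
  also have "\<dots> \<le> integral\<^sup>L M (\<lambda>w. e)"
  proof (rule integral_mono_AE)
    show "integrable M (\<lambda>w. \<bar>f w - p w\<bar>)" using i by auto
    show "integrable M (\<lambda>w. e)"
      by (rule finite_measure.integrable_const_bound[OF finite, where B="norm e"]) auto
    show "AE w in M. \<bar>f w - p w\<bar> \<le> e"
      using support by eventually_elim (rule less_imp_le, rule b, simp)
  qed
  also have "\<dots> = e * measure M (space M)" by simp
  finally show ?thesis .
qed

lemma tendsto_integral_cutoff:
  assumes F: "closed F" "F \<noteq> {}"
  shows "(\<lambda>j. integral\<^sup>L M (\<lambda>w. max 0 (1 - real j * infdist w F))) \<longlonglongrightarrow> measure M F"
proof -
  have "(\<lambda>j. integral\<^sup>L M (\<lambda>w. max 0 (1 - real j * infdist w F))) \<longlonglongrightarrow> integral\<^sup>L M (indicator F)"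
  proof (rule integral_dominated_convergence[where w="\<lambda>w. 1"])
    show "indicator F \<in> borel_measurable M"
      using F by (intro borel_measurable_sets_eq_borel[OF sets_eq]) (simp add: borel_measurable_indicator_iff)
    show "(\<lambda>w. max 0 (1 - real j * infdist w F)) \<in> borel_measurable M" for j
      by (intro borel_measurable_sets_eq_borel[OF sets_eq] borel_measurable_continuous_onI continuous_intros)
    show "integrable M (\<lambda>w. 1::real)"
      by (rule finite_measure.integrable_const_bound[OF finite, where B=1]) auto
    show "AE w in M. (\<lambda>j. max 0 (1 - real j * infdist w F)) \<longlonglongrightarrow> indicator F w"
      using tendsto_cutoff_indicator[OF F] by simp
    show "AE w in M. norm (max 0 (1 - real j * infdist w F)) \<le> 1" for j
      by (auto simp: infdist_nonneg)
  qed
  moreover have "integral\<^sup>L M (indicator F) = measure M F"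
    using sets_eq F by (simp add: sets.Int_space_eq2[symmetric] Int_absorb2)
  ultimately show ?thesis by simp
qed

end

lemma compact_support_measure_mono:
  "compact_support_measure M R \<Longrightarrow> R \<le> R' \<Longrightarrow> compact_support_measure M R'"
  unfolding compact_support_measure_def by (auto elim: eventually_mono)

text \<open>Real polynomials in \<open>Re w, Im w\<close> are polynomials in \<open>w\<close> and \<open>conj w\<close>; they are dense in the
  continuous functions on a disc, and continuous functions determine the measures of closed sets.\<close>

locale equal_moment_measures = M1: compact_support_measure M1 R + M2: compact_support_measure M2 R
  for M1 M2 :: "complex measure" and R :: real +
  assumes moments: "\<And>n m. integral\<^sup>L M1 (\<lambda>w. cnj (w ^ n) * w ^ m) = integral\<^sup>L M2 (\<lambda>w. cnj (w ^ n) * w ^ m)"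
begin

definition moment_invariant :: "(complex \<Rightarrow> complex) \<Rightarrow> bool" where
  "moment_invariant g \<longleftrightarrow> continuous_on UNIV g \<and>
     (\<forall>n m. integral\<^sup>L M1 (\<lambda>w. g w * (cnj (w ^ n) * w ^ m)) = integral\<^sup>L M2 (\<lambda>w. g w * (cnj (w ^ n) * w ^ m)))"

lemma moment_invariant_one: "moment_invariant (\<lambda>w. 1)"
  unfolding moment_invariant_def using moments by (simp add: continuous_on_const)

lemma moment_invariant_mult_ident:
  assumes "moment_invariant g"
  shows "moment_invariant (\<lambda>w. w * g w)"
  unfolding moment_invariant_def
proof (intro conjI allI)
  show "continuous_on UNIV (\<lambda>w. w * g w)" using assms unfolding moment_invariant_def by (intro continuous_intros) auto
  fix n m
  have e: "(\<lambda>w. w * g w * (cnj (w ^ n) * w ^ m)) = (\<lambda>w. g w * (cnj (w ^ n) * w ^ Suc m))"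
    by (rule ext) (simp add: mult_ac)
  show "integral\<^sup>L M1 (\<lambda>w. w * g w * (cnj (w ^ n) * w ^ m)) = integral\<^sup>L M2 (\<lambda>w. w * g w * (cnj (w ^ n) * w ^ m))"
    unfolding e using assms unfolding moment_invariant_def by blast
qed

lemma moment_invariant_mult_cnj:
  assumes "moment_invariant g"
  shows "moment_invariant (\<lambda>w. cnj w * g w)"
  unfolding moment_invariant_def
proof (intro conjI allI)
  show "continuous_on UNIV (\<lambda>w. cnj w * g w)" using assms unfolding moment_invariant_def by (intro continuous_intros) auto
  fix n m
  have e: "(\<lambda>w. cnj w * g w * (cnj (w ^ n) * w ^ m)) = (\<lambda>w. g w * (cnj (w ^ Suc n) * w ^ m))"
    by (rule ext) (simp add: mult_ac)
  show "integral\<^sup>L M1 (\<lambda>w. cnj w * g w * (cnj (w ^ n) * w ^ m)) = integral\<^sup>L M2 (\<lambda>w. cnj w * g w * (cnj (w ^ n) * w ^ m))"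
    unfolding e using assms unfolding moment_invariant_def by blast
qed

lemma moment_invariant_add:
  assumes "moment_invariant g" "moment_invariant h"
  shows "moment_invariant (\<lambda>w. g w + h w)"
  unfolding moment_invariant_def
proof (intro conjI allI)
  have cg: "continuous_on UNIV g" and ch: "continuous_on UNIV h" using assms unfolding moment_invariant_def by auto
  show "continuous_on UNIV (\<lambda>w. g w + h w)" using cg ch by (intro continuous_intros)
  fix n m
  have i: "integrable M1 (\<lambda>w. f w * (cnj (w ^ n) * w ^ m))" "integrable M2 (\<lambda>w. f w * (cnj (w ^ n) * w ^ m))"
    if "continuous_on UNIV f" for f
    using that by (auto intro!: M1.integrable_continuous M2.integrable_continuous continuous_intros)
  have e: "(\<lambda>w. (g w + h w) * (cnj (w ^ n) * w ^ m)) = (\<lambda>w. g w * (cnj (w ^ n) * w ^ m) + h w * (cnj (w ^ n) * w ^ m))"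
    by (rule ext) (simp add: algebra_simps)
  show "integral\<^sup>L M1 (\<lambda>w. (g w + h w) * (cnj (w ^ n) * w ^ m)) = integral\<^sup>L M2 (\<lambda>w. (g w + h w) * (cnj (w ^ n) * w ^ m))"
    unfolding e
    using assms i[OF cg] i[OF ch]
    by (simp add: Bochner_Integration.integral_add moment_invariant_def)
qed

lemma moment_invariant_cmult:
  assumes "moment_invariant g"
  shows "moment_invariant (\<lambda>w. c * g w)"
  unfolding moment_invariant_def
proof (intro conjI allI)
  show "continuous_on UNIV (\<lambda>w. c * g w)" using assms unfolding moment_invariant_def by (intro continuous_intros) auto
  fix n m
  have e: "(\<lambda>w. c * g w * (cnj (w ^ n) * w ^ m)) = (\<lambda>w. c * (g w * (cnj (w ^ n) * w ^ m)))"
    by (rule ext) (simp add: mult_ac)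
  show "integral\<^sup>L M1 (\<lambda>w. c * g w * (cnj (w ^ n) * w ^ m)) = integral\<^sup>L M2 (\<lambda>w. c * g w * (cnj (w ^ n) * w ^ m))"
    unfolding e using assms unfolding moment_invariant_def by simp
qed

lemma moment_invariant_real_polynomial:
  "real_polynomial_function p \<Longrightarrow> moment_invariant g \<Longrightarrow> moment_invariant (\<lambda>w. complex_of_real (p w) * g w)"
proof (induction p arbitrary: g rule: real_polynomial_function.induct)
  case (linear p)
  have e: "(\<lambda>w. complex_of_real (p w) * g w) = (\<lambda>w. ((p 1 - \<i> * p \<i>) / 2) * (w * g w) + ((p 1 + \<i> * p \<i>) / 2) * (cnj w * g w))"
  proof (rule ext)
    fix w show "complex_of_real (p w) * g w = ((p 1 - \<i> * p \<i>) / 2) * (w * g w) + ((p 1 + \<i> * p \<i>) / 2) * (cnj w * g w)"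
      unfolding complex_of_real_linear_eq[OF linear(1), of w] by (simp add: algebra_simps)
  qed
  show ?case unfolding e using linear(2) by (intro moment_invariant_add moment_invariant_cmult moment_invariant_mult_ident moment_invariant_mult_cnj)
next
  case (const c)
  then show ?case by (rule moment_invariant_cmult)
next
  case (add f1 f2)
  have e: "(\<lambda>w. complex_of_real (f1 w + f2 w) * g w) = (\<lambda>w. complex_of_real (f1 w) * g w + complex_of_real (f2 w) * g w)"
    by (rule ext) (simp add: algebra_simps)
  show ?case unfolding e using add by (intro moment_invariant_add) auto
next
  case (mult f1 f2)
  have e: "(\<lambda>w. complex_of_real (f1 w * f2 w) * g w) = (\<lambda>w. complex_of_real (f1 w) * (complex_of_real (f2 w) * g w))"
    by (rule ext) (simp add: algebra_simps)
  show ?case unfolding e using mult by auto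
qed

lemma integral_real_polynomial_eq:
  assumes "real_polynomial_function p"
  shows "integral\<^sup>L M1 p = integral\<^sup>L M2 p"
proof -
  have "moment_invariant (\<lambda>w. complex_of_real (p w) * 1)" by (rule moment_invariant_real_polynomial[OF assms moment_invariant_one])
  then have "\<forall>n m. integral\<^sup>L M1 (\<lambda>w. complex_of_real (p w) * 1 * (cnj (w ^ n) * w ^ m)) =
     integral\<^sup>L M2 (\<lambda>w. complex_of_real (p w) * 1 * (cnj (w ^ n) * w ^ m))"
    unfolding moment_invariant_def by blast
  from this[rule_format, of 0 0] show ?thesis by simp
qed

lemma integral_continuous_eq:
  fixes f :: "complex \<Rightarrow> real"
  assumes cf: "continuous_on UNIV f"
  shows "integral\<^sup>L M1 f = integral\<^sup>L M2 f"
proof -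
  define C where "C = measure M1 (space M1) + measure M2 (space M2) + 1"
  have C: "C > 0" by (simp add: C_def add_nonneg_pos)
  have "\<bar>integral\<^sup>L M1 f - integral\<^sup>L M2 f\<bar> \<le> \<epsilon>" if "\<epsilon> > 0" for \<epsilon>
  proof -
    have "\<epsilon> / C > 0" using that C by simp
    then obtain p where p: "real_polynomial_function p" "\<And>w. w \<in> cball 0 R \<Longrightarrow> \<bar>f w - p w\<bar> < \<epsilon> / C"
      using Stone_Weierstrass_real_polynomial_function[OF compact_cball continuous_on_subset[OF cf]] by blast
    have cp: "continuous_on UNIV p"
      using p(1) by (simp add: continuous_at_imp_continuous_on continuous_real_polymonial_function)
    have "\<bar>integral\<^sup>L M1 f - integral\<^sup>L M1 p\<bar> \<le> \<epsilon> / C * measure M1 (space M1)"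
      by (rule M1.abs_integral_diff_le[OF cf cp p(2)])
    moreover have "\<bar>integral\<^sup>L M2 f - integral\<^sup>L M2 p\<bar> \<le> \<epsilon> / C * measure M2 (space M2)"
      by (rule M2.abs_integral_diff_le[OF cf cp p(2)])
    moreover have "integral\<^sup>L M1 p = integral\<^sup>L M2 p" by (rule integral_real_polynomial_eq[OF p(1)])
    moreover have "\<epsilon> / C * measure M1 (space M1) + \<epsilon> / C * measure M2 (space M2) \<le> \<epsilon>"
    proof -
      have "\<epsilon> / C * measure M1 (space M1) + \<epsilon> / C * measure M2 (space M2) = \<epsilon> / C * (C - 1)"
        by (simp add: C_def algebra_simps add_divide_distrib)
      also have "\<dots> \<le> \<epsilon> / C * C" using that C by (intro mult_left_mono) auto
      finally show ?thesis using C by simp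
    qed
    ultimately show ?thesis by linarith
  qed
  then have "\<bar>integral\<^sup>L M1 f - integral\<^sup>L M2 f\<bar> \<le> 0" by (rule field_le_epsilon) simp
  then show ?thesis by simp
qed

lemma measure_closed_eq:
  assumes F: "closed F"
  shows "measure M1 F = measure M2 F"
proof (cases "F = {}")
  case False
  have eq: "integral\<^sup>L M1 (\<lambda>w. max 0 (1 - real j * infdist w F))
      = integral\<^sup>L M2 (\<lambda>w. max 0 (1 - real j * infdist w F))" for j
    by (intro integral_continuous_eq continuous_intros)
  have "(\<lambda>j. integral\<^sup>L M2 (\<lambda>w. max 0 (1 - real j * infdist w F))) \<longlonglongrightarrow> measure M1 F"
    using M1.tendsto_integral_cutoff[OF F False] unfolding eq .
  from LIMSEQ_unique[OF this M2.tendsto_integral_cutoff[OF F False]] show ?thesis .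
qed simp

lemma measures_eq: "M1 = M2"
proof (rule measure_eqI_generator_eq[where E="Collect closed" and \<Omega>=UNIV and A="\<lambda>i. UNIV"])
  show "Int_stable (Collect closed)" by (auto simp: Int_stable_def)
  show "Collect closed \<subseteq> Pow UNIV" by auto
  have sb: "sets (borel :: complex measure) = sigma_sets UNIV (Collect closed)"
    by (metis borel_eq_closed sets_measure_of top_greatest Pow_UNIV)
  show "sets M1 = sigma_sets UNIV (Collect closed)" using M1.sets_eq sb by simp
  show "sets M2 = sigma_sets UNIV (Collect closed)" using M2.sets_eq sb by simp
  fix X :: "complex set" assume "X \<in> Collect closed"
  then have c: "closed X" by simp
  have "X \<in> sets M1" "X \<in> sets M2" using c M1.sets_eq M2.sets_eq by auto
  then show "emeasure M1 X = emeasure M2 X"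
    using measure_closed_eq[OF c] finite_measure.emeasure_eq_measure[OF M1.finite] finite_measure.emeasure_eq_measure[OF M2.finite]
    by simp
next
  show "range (\<lambda>i. UNIV) \<subseteq> Collect closed" by auto
  show "(\<Union>i. UNIV) = UNIV" by simp
  show "emeasure M1 UNIV \<noteq> \<infinity>" for i :: nat
  proof -
    have "space M1 = UNIV" using sets_eq_imp_space_eq[OF M1.sets_eq] by simp
    then show ?thesis using finite_measure.emeasure_finite[OF M1.finite, of UNIV] by simp
  qed
qed

end

section \<open>Strips and the logarithm\<close>

definition strip :: "int \<Rightarrow> complex set" where
  "strip k = {z. (2 * of_int k - 1) * pi < Im z \<and> Im z < (2 * of_int k + 1) * pi}"

definition strip_edge :: "int \<Rightarrow> complex set" where
  "strip_edge k = {z. Im z = (2 * of_int k + 1) * pi}"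

definition strip_shift :: "int \<Rightarrow> int \<Rightarrow> complex \<Rightarrow> complex" where
  "strip_shift k0 k1 z = (\<Sum>k\<in>{k0..k1}. complex_of_real (2 * of_int k * pi) * \<i> * indicator (strip k) z
     + complex_of_real ((2 * of_int k + 1) * pi) * \<i> * indicator (strip_edge k) z)"

text \<open>The principal logarithm, except that on its cut \<open>\<real>\<^sub>\<le>\<^sub>0\<close> the imaginary part \<open>\<pi>\<close> is
  dropped.  Then \<open>z - Ln_cut (exp z)\<close> is \<open>2k\<pi>i\<close> on \<open>strip k\<close> and \<open>(2k+1)\<pi>i\<close> on \<open>strip_edge k\<close>.\<close>

definition Ln_cut :: "complex \<Rightarrow> complex" where
  "Ln_cut w = (if w \<in> \<real>\<^sub>\<le>\<^sub>0 then complex_of_real (ln (cmod w)) else Ln w)"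

lemma strip_borel: "strip k \<in> sets borel"
  unfolding strip_def by measurable

lemma strip_edge_borel: "strip_edge k \<in> sets borel"
  unfolding strip_edge_def by measurable

lemma Ln_cut_borel: "Ln_cut \<in> borel_measurable borel"
proof -
  have eq: "Ln_cut = (\<lambda>w. (if w \<in> \<real>\<^sub>\<le>\<^sub>0 then complex_of_real (ln (cmod w)) else 0) + (if w \<in> \<real>\<^sub>\<le>\<^sub>0 then 0 else Ln w))"
    by (rule ext) (simp add: Ln_cut_def)
  have "(\<lambda>w. if w \<in> \<real>\<^sub>\<le>\<^sub>0 then 0 else Ln w) \<in> borel_measurable borel"
    by (rule borel_measurable_continuous_on_if) (auto intro!: continuous_on_Ln continuous_intros)
  moreover have "(\<lambda>w::complex. if w \<in> \<real>\<^sub>\<le>\<^sub>0 then complex_of_real (ln (cmod w)) else 0) \<in> borel_measurable borel"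
    by (rule measurable_If_set) auto
  ultimately show ?thesis unfolding eq by measurable
qed

lemma Ln_cut_exp_strip:
  assumes "z \<in> strip k"
  shows "Ln_cut (exp z) = z - complex_of_real (2 * of_int k * pi) * \<i>"
proof -
  define w where "w = z - complex_of_real (2 * of_int k * pi) * \<i>"
  have w: "- pi < Im w" "Im w < pi" using assms by (simp_all add: w_def strip_def algebra_simps)
  have "z = w + \<i> * (of_int k * (of_real pi * 2))" by (simp add: w_def complex_eq_iff)
  then have ez: "exp z = exp w" by simp
  have "exp w \<notin> \<real>\<^sub>\<le>\<^sub>0"
  proof
    assume "exp w \<in> \<real>\<^sub>\<le>\<^sub>0"
    then have "sin (Im w) = 0" "cos (Im w) \<le> 0"
      by (auto simp: complex_nonpos_Reals_iff Im_exp Re_exp mult_le_0_iff)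
    then show False using sin_eq_0_pi w by fastforce
  qed
  then have "Ln_cut (exp z) = Ln (exp w)" by (simp add: Ln_cut_def ez)
  also have "\<dots> = w" using w by simp
  finally show ?thesis by (simp add: w_def)
qed

lemma Ln_cut_exp_strip_edge:
  assumes "z \<in> strip_edge k"
  shows "Ln_cut (exp z) = z - complex_of_real ((2 * of_int k + 1) * pi) * \<i>"
proof -
  have "Im z = pi * of_int (2 * k + 1)" using assms by (simp add: strip_edge_def mult.commute)
  then have "cos (Im z) = - 1" "sin (Im z) = 0" by (simp_all only: cos_npi_int sin_npi_int) simp
  then have "exp z \<in> \<real>\<^sub>\<le>\<^sub>0" by (simp add: complex_nonpos_Reals_iff Re_exp Im_exp)
  then show ?thesis using assms by (simp add: Ln_cut_def complex_eq_iff strip_edge_def)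
qed

lemma floor_strip: "z \<in> strip k \<Longrightarrow> \<lfloor>(Im z / pi + 1) / 2\<rfloor> = k"
  unfolding strip_def floor_eq_iff by (auto simp: field_simps)

lemma strip_unique: "z \<in> strip i \<Longrightarrow> z \<in> strip j \<Longrightarrow> i = j"
  using floor_strip by metis

lemma strip_edge_unique:
  "z \<in> strip_edge i \<Longrightarrow> z \<in> strip_edge j \<Longrightarrow> i = j"
  by (simp add: strip_edge_def)

lemma strip_edge_not_in_strip:
  assumes "z \<in> strip_edge j" shows "z \<notin> strip i"
proof
  assume "z \<in> strip i"
  moreover have "(Im z / pi + 1) / 2 = of_int (j + 1)" using assms by (simp add: strip_edge_def field_simps)
  then have "\<lfloor>(Im z / pi + 1) / 2\<rfloor> = j + 1" by (metis floor_of_int)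
  ultimately show False using assms floor_strip by (fastforce simp: strip_def strip_edge_def)
qed

lemma strip_or_strip_edge:
  assumes "(2 * of_int k0 + 1) * pi \<le> Im z" "Im z \<le> (2 * of_int k1 + 1) * pi"
  obtains k where "k \<in> {k0..k1}" "z \<in> strip k" | k where "k \<in> {k0..k1}" "z \<in> strip_edge k"
proof -
  define t where "t = Im z / pi"
  define j where "j = \<lfloor>(t + 1) / 2\<rfloor>"
  have t: "2 * of_int k0 + 1 \<le> t" "t \<le> 2 * of_int k1 + 1" "Im z = t * pi"
    using assms by (simp_all add: t_def field_simps)
  have "of_int j \<le> (t + 1) / 2" "(t + 1) / 2 < of_int j + 1"
    unfolding j_def by (rule of_int_floor_le, rule real_of_int_floor_add_one_gt)
  then have j: "2 * of_int j - 1 \<le> t" "t < 2 * of_int j + 1" by (simp_all add: field_simps)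
  show ?thesis
  proof (cases "t = 2 * of_int j - 1")
    case True
    then have "real_of_int k0 \<le> of_int (j - 1)" "real_of_int (j - 1) \<le> of_int k1" using t by auto
    then have "j - 1 \<in> {k0..k1}" by (simp only: of_int_le_iff atLeastAtMost_iff)
    moreover have "Im z = (2 * of_int j - 1) * pi" using True t(3) by simp
    then have "z \<in> strip_edge (j - 1)" by (simp add: strip_edge_def algebra_simps)
    ultimately show ?thesis by (rule that(2))
  next
    case False
    then have "real_of_int k0 < of_int j" "real_of_int j < of_int (k1 + 1)" using t j by auto
    then have "j \<in> {k0..k1}" by (simp only: of_int_less_iff) auto
    moreover have "z \<in> strip j" using False t j by (simp add: strip_def)
    ultimately show ?thesis by (rule that(1))
  qed
qed

lemma Ln_cut_exp_eq_diff_strip_shift: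
  assumes "(2 * of_int k0 + 1) * pi \<le> Im z" "Im z \<le> (2 * of_int k1 + 1) * pi"
  shows "Ln_cut (exp z) = z - strip_shift k0 k1 z"
  using assms
proof (cases rule: strip_or_strip_edge)
  case (1 j)
  have "strip_shift k0 k1 z = (\<Sum>k\<in>{k0..k1}. if k = j then complex_of_real (2 * of_int j * pi) * \<i> else 0)"
    unfolding strip_shift_def using 1 strip_unique strip_edge_not_in_strip
    by (intro sum.cong) (auto simp: indicator_def)
  then show ?thesis using 1 by (simp add: Ln_cut_exp_strip)
next
  case (2 j)
  have "strip_shift k0 k1 z = (\<Sum>k\<in>{k0..k1}. if k = j then complex_of_real ((2 * of_int j + 1) * pi) * \<i> else 0)"
    unfolding strip_shift_def using 2 strip_edge_unique strip_edge_not_in_strip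
    by (intro sum.cong) (auto simp: indicator_def)
  then show ?thesis using 2 by (simp add: Ln_cut_exp_strip_edge)
qed

lemma sum_scaleC_diff:
  "(\<Sum>k\<in>K. a k *\<^sub>C (x k - y k) + b k *\<^sub>C (u k - w k))
     = (\<Sum>k\<in>K. a k *\<^sub>C x k + b k *\<^sub>C u k) - (\<Sum>k\<in>K. a k *\<^sub>C y k + b k *\<^sub>C (w k :: 'a::complex_vector))"
  by (simp add: scaleC_diff_right algebra_simps flip: sum_subtractf)

section \<open>Spectral projections onto strips\<close>

context spectral_decomposition
begin

definition strip_op :: "int \<Rightarrow> int \<Rightarrow> 'h \<Rightarrow> 'h" where
  "strip_op k0 k1 v = (\<Sum>k\<in>{k0..k1}. (complex_of_real (2 * of_int k * pi) * \<i>) *\<^sub>C E (strip k) v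
     + (complex_of_real ((2 * of_int k + 1) * pi) * \<i>) *\<^sub>C E (strip_edge k) v)"

definition exp_distr :: "'h \<Rightarrow> complex measure" where
  "exp_distr v = distr (mu v) borel exp"

lemma strip_op_clinear: "is_clinear (strip_op k0 k1)"
  unfolding strip_op_def[abs_def]
  by (intro clinear_compose_sum clinear_compose_add clinear_compose_scaleC E_clinear strip_borel strip_edge_borel)

lemma cinner_strip_op: "cinner v (strip_op k0 k1 v) = integral\<^sup>L (mu v) (strip_shift k0 k1)"
proof -
  define c d where "c k = complex_of_real (2 * of_int k * pi) * \<i>"
    and "d k = complex_of_real ((2 * of_int k + 1) * pi) * \<i>" for k :: int
  have int: "integrable (mu v) (\<lambda>z. c k * indicator (strip k) z + d k * indicator (strip_edge k) z)" for k
    by (intro Bochner_Integration.integrable_add integrable_indicator_mu strip_borel strip_edge_borel)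
  have "cinner v (strip_op k0 k1 v)
      = (\<Sum>k\<in>{k0..k1}. c k * (norm (E (strip k) v))\<^sup>2 + d k * (norm (E (strip_edge k) v))\<^sup>2)"
    by (simp add: strip_op_def c_def d_def cinner_sum_right cinner_add_right cinner_scaleC_right
        cinner_E_self strip_borel strip_edge_borel)
  also have "\<dots> = (\<Sum>k\<in>{k0..k1}. integral\<^sup>L (mu v) (\<lambda>z. c k * indicator (strip k) z + d k * indicator (strip_edge k) z))"
    by (simp only: Bochner_Integration.integral_add[OF integrable_indicator_mu[OF strip_borel]
          integrable_indicator_mu[OF strip_edge_borel]]
        integral_indicator_mu[OF strip_borel] integral_indicator_mu[OF strip_edge_borel])
  also have "\<dots> = integral\<^sup>L (mu v) (strip_shift k0 k1)"
    unfolding strip_shift_def[abs_def] c_def d_def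
    by (rule Bochner_Integration.integral_sum[symmetric]) (rule int[unfolded c_def d_def])
  finally show ?thesis .
qed

lemma cinner_diff_strip_op:
  assumes "op_spectrum T \<subseteq> {z. (2 * of_int k0 + 1) * pi \<le> Im z \<and> Im z \<le> (2 * of_int k1 + 1) * pi}"
  shows "cinner v (T v - strip_op k0 k1 v) = integral\<^sup>L (exp_distr v) Ln_cut"
proof -
  have int: "integrable (mu v) (strip_shift k0 k1)"
    unfolding strip_shift_def[abs_def]
    by (intro Bochner_Integration.integrable_sum Bochner_Integration.integrable_add
        integrable_indicator_mu strip_borel strip_edge_borel)
  have "cinner v (T v - strip_op k0 k1 v) = integral\<^sup>L (mu v) (\<lambda>z. z - strip_shift k0 k1 z)"
    using integrable_mu_ident int
    by (simp add: cinner_diff_right cinner_T_integral cinner_strip_op Bochner_Integration.integral_diff)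
  also have "\<dots> = integral\<^sup>L (mu v) (\<lambda>z. Ln_cut (exp z))"
  proof (rule integral_cong_AE)
    show "(\<lambda>z. z - strip_shift k0 k1 z) \<in> borel_measurable (mu v)"
      using integrable_mu_ident int by (intro borel_measurable_integrable) auto
    show "(\<lambda>z. Ln_cut (exp z)) \<in> borel_measurable (mu v)"
      by (intro measurable_mu measurable_compose[OF _ Ln_cut_borel] borel_measurable_continuous_onI continuous_intros)
    show "AE z in mu v. z - strip_shift k0 k1 z = Ln_cut (exp z)"
      using AE_mu_spectrum[of v]
      by eventually_elim (use assms Ln_cut_exp_eq_diff_strip_shift in fastforce)
  qed
  also have "\<dots> = integral\<^sup>L (exp_distr v) Ln_cut"
    unfolding exp_distr_def
    by (rule integral_distr[symmetric]) (auto intro: measurable_mu Ln_cut_borel borel_measurable_continuous_onI continuous_intros)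
  finally show ?thesis .
qed

lemma compact_support_exp_distr: "compact_support_measure (exp_distr v) (exp op_bound)"
  unfolding compact_support_measure_def
proof (intro conjI)
  have exp_meas: "exp \<in> measurable (mu v) borel"
    by (intro measurable_mu borel_measurable_continuous_onI continuous_intros)
  show "finite_measure (exp_distr v)"
    unfolding exp_distr_def using finite_measure_mu exp_meas by (rule finite_measure.finite_measure_distr)
  show "sets (exp_distr v) = sets borel" by (simp add: exp_distr_def)
  show "AE w in exp_distr v. cmod w \<le> exp op_bound"
    unfolding exp_distr_def
  proof (subst AE_distr_iff[OF exp_meas])
    show "{x \<in> space borel. cmod x \<le> exp op_bound} \<in> sets borel" by measurable
    show "AE z in mu v. cmod (exp z) \<le> exp op_bound"
      using AE_mu_spectrum[of v]
    proof eventually_elim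
      case (elim z)
      then have "Re z \<le> op_bound" using spectrum_subset_cball_op_bound abs_Re_le_cmod[of z] by force
      then show ?case by simp
    qed
  qed
qed

lemma integral_exp_distr_moment:
  "integral\<^sup>L (exp_distr v) (\<lambda>w. cnj (w ^ n) * w ^ m) = cinner ((op_exp T ^^ n) v) ((op_exp T ^^ m) v)"
proof -
  have "continuous_on UNIV (\<lambda>w::complex. cnj (w ^ n) * w ^ m)" by (intro continuous_intros)
  then show ?thesis
    unfolding exp_distr_def cinner_funpow_op_exp_integral
    by (intro integral_distr measurable_mu borel_measurable_continuous_onI continuous_intros)
qed

end

lemma spectral_decompositionI:
  "spectral_measure_of T E \<Longrightarrow> is_normal_op T \<Longrightarrow> spectral_decomposition E T"
  by (simp add: spectral_decomposition_def spectral_decomposition_axioms_def is_normal_op_def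
      spectral_measure_imp_proj_valued_measure)

text \<open>The moments of the image of \<open>\<mu>\<^sub>v\<close> under \<open>exp\<close> are the inner products
  \<open>\<langle>e\<^sup>n\<^sup>X v, e\<^sup>m\<^sup>X v\<rangle>\<close>, so they only depend on \<open>e\<^sup>X\<close>.\<close>

lemma exp_distr_eq:
  assumes X: "spectral_decomposition E_X X" and Y: "spectral_decomposition E_Y Y"
    and exp_eq: "op_exp X = op_exp Y"
  shows "spectral_decomposition.exp_distr E_X v = spectral_decomposition.exp_distr E_Y v"
proof -
  interpret X: spectral_decomposition E_X X by (fact X)
  interpret Y: spectral_decomposition E_Y Y by (fact Y)
  define R where "R = max (exp X.op_bound) (exp Y.op_bound)"
  have "compact_support_measure (X.exp_distr v) R" "compact_support_measure (Y.exp_distr v) R"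
    unfolding R_def
    by (rule compact_support_measure_mono[OF X.compact_support_exp_distr]
          compact_support_measure_mono[OF Y.compact_support_exp_distr]; simp)+
  moreover have "integral\<^sup>L (X.exp_distr v) (\<lambda>w. cnj (w ^ n) * w ^ m)
      = integral\<^sup>L (Y.exp_distr v) (\<lambda>w. cnj (w ^ n) * w ^ m)" for n m
    by (simp only: X.integral_exp_distr_moment Y.integral_exp_distr_moment exp_eq)
  ultimately interpret equal_moment_measures "X.exp_distr v" "Y.exp_distr v" R
    by (intro equal_moment_measures.intro equal_moment_measures_axioms.intro)
  show ?thesis by (rule measures_eq)
qed

theorem theorem4p1:
  fixes X Y :: "'h::chilbert_space \<Rightarrow> 'h"
    and E_X E_Y :: "complex set \<Rightarrow> 'h \<Rightarrow> 'h"
    and k0 k1 :: int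
  assumes "is_normal_op X" and "is_normal_op Y"
    and "op_exp X = op_exp Y"
    and "spectral_measure_of X E_X" and "spectral_measure_of Y E_Y"
    and "op_spectrum X \<subseteq> {z. (2 * of_int k0 + 1) * pi \<le> Im z \<and> Im z \<le> (2 * of_int k1 + 1) * pi}"
    and "op_spectrum Y \<subseteq> {z. (2 * of_int k0 + 1) * pi \<le> Im z \<and> Im z \<le> (2 * of_int k1 + 1) * pi}"
  shows "(\<lambda>v. X v - Y v) =
    (\<lambda>v. \<Sum>k\<in>{k0..k1}.
       (complex_of_real (2 * of_int k * pi) * \<i>) *\<^sub>C
         (E_X {z. (2 * of_int k - 1) * pi < Im z \<and> Im z < (2 * of_int k + 1) * pi} v
          - E_Y {z. (2 * of_int k - 1) * pi < Im z \<and> Im z < (2 * of_int k + 1) * pi} v)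
     + (complex_of_real ((2 * of_int k + 1) * pi) * \<i>) *\<^sub>C
         (E_X {z. Im z = (2 * of_int k + 1) * pi} v - E_Y {z. Im z = (2 * of_int k + 1) * pi} v))"
proof -
  interpret X: spectral_decomposition E_X X using assms(4,1) by (rule spectral_decompositionI)
  interpret Y: spectral_decomposition E_Y Y using assms(5,2) by (rule spectral_decompositionI)
  define D where "D v = (X v - X.strip_op k0 k1 v) - (Y v - Y.strip_op k0 k1 v)" for v
  have "is_clinear D"
    unfolding D_def[abs_def]
    by (intro clinear_compose_diff X.T_clinear Y.T_clinear X.strip_op_clinear Y.strip_op_clinear)
  moreover have "cinner w (D w) = 0" for w
    using X.cinner_diff_strip_op[OF assms(6)] Y.cinner_diff_strip_op[OF assms(7)]
      exp_distr_eq[OF X.spectral_decomposition_axioms Y.spectral_decomposition_axioms assms(3)]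
    by (simp add: D_def cinner_diff_right)
  ultimately have "D v = 0" for v by (rule clinear_eq_zero_if_quadratic_form_zero)
  then have "X v - Y v = X.strip_op k0 k1 v - Y.strip_op k0 k1 v" for v
    by (simp add: D_def algebra_simps)
  then show ?thesis
    unfolding sum_scaleC_diff X.strip_op_def Y.strip_op_def strip_def strip_edge_def by (intro ext)
qed

end
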